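(* Let $A$ be a positively graded commutative coherent ring, let $E$ be an indecomposable injective graded $A$-module, and let $P(E)$ be the sum of annihilator ideals of non-zero homogeneous elements of $E$. Then $E$ and $E_{P(E)}$ are topologically indistinguishable in $\operatorname{inj}_{\mathrm{zg}}A$ and in $\operatorname{inj}_{\mathrm{zar}}A$; that is, for every $M\in\operatorname{gr}A$, $\mathcal Hom_A(M,E)\ne0$ if and only if $\mathcal Hom_A(M,E_{P(E)})\ne0$.
   Context: All rings are commutative with unit; $A=\bigoplus_{j\ge0}A_j$. $\operatorname{Gr}A$: graded $A$-modules, shifts $M(n)_j=M_{n+j}$; $\operatorname{gr}A$: finitely presented graded modules; $A$ coherent means every finitely generated graded ideal is finitely presented. $\mathcal Hom_A(M,N)=\bigoplus_{n\in\mathbb Z}\operatorname{Gr}A(M,N(n))$. $\operatorname{inj}A$: isomorphism classes of indecomposable injective objects of $\operatorname{Gr}A$. For a homogeneous prime $P$, $E_P$ is the injective hull of $A/P$ in $\operatorname{Gr}A$. $\operatorname{inj}_{\mathrm{zar}}A$: $\operatorname{inj}A$ with basis of opens $[M]=\{E\mid\mathcal Hom_A(M,E)=0\}$, $M\in\operatorname{gr}A$; $\operatorname{inj}_{\mathrm{zg}}A$: $\operatorname{inj}A$ with basis of opens $(M)=\{E\mid\mathcal Hom_A(M,E)\ne0\}$, $M\in\operatorname{gr}A$. *)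

theory Defs
  imports Main
begin

(* Ring A: the whole type 'a (comm_ring_1), grading Ag :: nat => 'a set.
   Graded A-modules: a type 'm :: ab_group_add (carrier = UNIV), scalar action sm,
   grading Mg :: int => 'm set. *)

definition add_subgroup :: "'m::ab_group_add set \<Rightarrow> bool" where
  "add_subgroup S \<longleftrightarrow> 0 \<in> S \<and> (\<forall>x\<in>S. \<forall>y\<in>S. x + y \<in> S) \<and> (\<forall>x\<in>S. - x \<in> S)"

definition dsum_decomp :: "('i \<Rightarrow> 'm::ab_group_add set) \<Rightarrow> bool" where
  "dsum_decomp G \<longleftrightarrow>
     (\<forall>x. \<exists>!c. (\<forall>i. c i \<in> G i) \<and> finite {i. c i \<noteq> 0} \<and> x = (\<Sum>i\<in>{i. c i \<noteq> 0}. c i))"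

definition graded_ring :: "(nat \<Rightarrow> 'a::comm_ring_1 set) \<Rightarrow> bool" where
  "graded_ring Ag \<longleftrightarrow> (\<forall>j. add_subgroup (Ag j)) \<and> 1 \<in> Ag 0 \<and>
     (\<forall>i j. \<forall>x\<in>Ag i. \<forall>y\<in>Ag j. x * y \<in> Ag (i + j)) \<and> dsum_decomp Ag"

text \<open>A regarded as a Z-graded module over itself\<close>
definition Agz :: "(nat \<Rightarrow> 'a::comm_ring_1 set) \<Rightarrow> int \<Rightarrow> 'a set" where
  "Agz Ag n = (if 0 \<le> n then Ag (nat n) else {0})"

definition graded_module :: "(nat \<Rightarrow> 'a::comm_ring_1 set) \<Rightarrow> ('a \<Rightarrow> 'm::ab_group_add \<Rightarrow> 'm)
    \<Rightarrow> (int \<Rightarrow> 'm set) \<Rightarrow> bool" where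
  "graded_module Ag sm Mg \<longleftrightarrow>
     (\<forall>a b x. sm (a + b) x = sm a x + sm b x) \<and> (\<forall>a x y. sm a (x + y) = sm a x + sm a y) \<and>
     (\<forall>a b x. sm (a * b) x = sm a (sm b x)) \<and> (\<forall>x. sm 1 x = x) \<and>
     (\<forall>n. add_subgroup (Mg n)) \<and>
     (\<forall>i n. \<forall>a\<in>Ag i. \<forall>x\<in>Mg n. sm a x \<in> Mg (int i + n)) \<and> dsum_decomp Mg"

definition homogeneous :: "('i \<Rightarrow> 'm set) \<Rightarrow> 'm \<Rightarrow> bool" where
  "homogeneous G x \<longleftrightarrow> (\<exists>n. x \<in> G n)"

definition graded_submodule :: "('a \<Rightarrow> 'm::ab_group_add \<Rightarrow> 'm) \<Rightarrow> (int \<Rightarrow> 'm set) \<Rightarrow> 'm set \<Rightarrow> bool" where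
  "graded_submodule sm Mg S \<longleftrightarrow> add_subgroup S \<and> (\<forall>a. \<forall>x\<in>S. sm a x \<in> S) \<and>
     (\<forall>x\<in>S. \<exists>c. (\<forall>n. c n \<in> S \<inter> Mg n) \<and> finite {n. c n \<noteq> 0} \<and> x = (\<Sum>n\<in>{n. c n \<noteq> 0}. c n))"

text \<open>f : M -> N(d) in Gr A, i.e. a graded A-linear map of degree d\<close>
definition gr_hom :: "('a \<Rightarrow> 'm::ab_group_add \<Rightarrow> 'm) \<Rightarrow> (int \<Rightarrow> 'm set) \<Rightarrow>
    ('a \<Rightarrow> 'n::ab_group_add \<Rightarrow> 'n) \<Rightarrow> (int \<Rightarrow> 'n set) \<Rightarrow> int \<Rightarrow> ('m \<Rightarrow> 'n) \<Rightarrow> bool" where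
  "gr_hom sm Mg sn Ng d f \<longleftrightarrow> (\<forall>x y. f (x + y) = f x + f y) \<and> (\<forall>a x. f (sm a x) = sn a (f x)) \<and>
     (\<forall>n. f ` Mg n \<subseteq> Ng (n + d))"

definition Hom_nonzero :: "('a \<Rightarrow> 'm::ab_group_add \<Rightarrow> 'm) \<Rightarrow> (int \<Rightarrow> 'm set) \<Rightarrow>
    ('a \<Rightarrow> 'n::ab_group_add \<Rightarrow> 'n) \<Rightarrow> (int \<Rightarrow> 'n set) \<Rightarrow> bool" where
  "Hom_nonzero sm Mg sn Ng \<longleftrightarrow> (\<exists>d f. gr_hom sm Mg sn Ng d f \<and> (\<exists>x. f x \<noteq> 0))"

definition hom_on :: "'u set \<Rightarrow> ('a \<Rightarrow> 'u::ab_group_add \<Rightarrow> 'u) \<Rightarrow> (int \<Rightarrow> 'u set) \<Rightarrow>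
    ('a \<Rightarrow> 'e::ab_group_add \<Rightarrow> 'e) \<Rightarrow> (int \<Rightarrow> 'e set) \<Rightarrow> ('u \<Rightarrow> 'e) \<Rightarrow> bool" where
  "hom_on S sn Ng se Eg f \<longleftrightarrow> (\<forall>x\<in>S. \<forall>y\<in>S. f (x + y) = f x + f y) \<and>
     (\<forall>a. \<forall>x\<in>S. f (sn a x) = se a (f x)) \<and> (\<forall>n. f ` (S \<inter> Ng n) \<subseteq> Eg n)"

text \<open>Injectivity in Gr A, tested against graded modules carried by the type 'u
  (every morphism from a graded submodule extends).\<close>
definition gr_injective :: "'u::ab_group_add itself \<Rightarrow> (nat \<Rightarrow> 'a::comm_ring_1 set) \<Rightarrow>
    ('a \<Rightarrow> 'e::ab_group_add \<Rightarrow> 'e) \<Rightarrow> (int \<Rightarrow> 'e set) \<Rightarrow> bool" where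
  "gr_injective T Ag se Eg \<longleftrightarrow>
     (\<forall>(sn::'a \<Rightarrow> 'u \<Rightarrow> 'u) Ng S f. graded_module Ag sn Ng \<and> graded_submodule sn Ng S \<and>
        hom_on S sn Ng se Eg f \<longrightarrow> (\<exists>g. gr_hom sn Ng se Eg 0 g \<and> (\<forall>x\<in>S. g x = f x)))"

definition indecomposable :: "('a \<Rightarrow> 'e::ab_group_add \<Rightarrow> 'e) \<Rightarrow> (int \<Rightarrow> 'e set) \<Rightarrow> bool" where
  "indecomposable se Eg \<longleftrightarrow> (\<exists>x::'e. x \<noteq> 0) \<and>
     (\<forall>S T. graded_submodule se Eg S \<and> graded_submodule se Eg T \<and> S \<inter> T = {0} \<and>
        (\<forall>x. \<exists>s\<in>S. \<exists>t\<in>T. x = s + t) \<longrightarrow> S = {0} \<or> T = {0})"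

definition PE :: "('a::comm_ring_1 \<Rightarrow> 'e::ab_group_add \<Rightarrow> 'e) \<Rightarrow> (int \<Rightarrow> 'e set) \<Rightarrow> 'a set" where
  "PE se Eg = {a. \<exists>F c. finite F \<and> (\<forall>x\<in>F. x \<noteq> 0 \<and> homogeneous Eg x \<and> se (c x) x = 0) \<and>
                         a = (\<Sum>x\<in>F. c x)}"

text \<open>(sf, Fg) is an injective hull of A/P in Gr A: injective, with a degree-0 map
  A -> F whose kernel is P (i.e. an embedding A/P -> F) and whose image is essential.\<close>
definition inj_hull_quot :: "'u::ab_group_add itself \<Rightarrow> (nat \<Rightarrow> 'a::comm_ring_1 set) \<Rightarrow> 'a set \<Rightarrow>
    ('a \<Rightarrow> 'f::ab_group_add \<Rightarrow> 'f) \<Rightarrow> (int \<Rightarrow> 'f set) \<Rightarrow> bool" where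
  "inj_hull_quot T Ag P sf Fg \<longleftrightarrow> graded_module Ag sf Fg \<and> gr_injective T Ag sf Fg \<and>
     (\<exists>\<phi>. gr_hom (*) (Agz Ag) sf Fg 0 \<phi> \<and> {a. \<phi> a = 0} = P \<and>
        (\<forall>S. graded_submodule sf Fg S \<and> S \<noteq> {0} \<longrightarrow> (\<exists>y\<in>S. y \<noteq> 0 \<and> y \<in> range \<phi>)))"

text \<open>A graded submodule S of M is finitely presented: finitely many homogeneous generators
  g_i (of degree d i) and the graded syzygy module is generated by finitely many homogeneous
  relations (r j of degree e j in the graded free module sum_i A(-d i)).\<close>
definition fin_pres :: "(nat \<Rightarrow> 'a::comm_ring_1 set) \<Rightarrow> ('a \<Rightarrow> 'm::ab_group_add \<Rightarrow> 'm) \<Rightarrow>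
    (int \<Rightarrow> 'm set) \<Rightarrow> 'm set \<Rightarrow> bool" where
  "fin_pres Ag sm Mg S \<longleftrightarrow>
     (\<exists>(k::nat) (g::nat \<Rightarrow> 'm) (d::nat \<Rightarrow> int).
        (\<forall>i<k. g i \<in> S \<inter> Mg (d i)) \<and> S = {\<Sum>i<k. sm (a i) (g i) | a. True} \<and>
        (\<exists>(l::nat) (r::nat \<Rightarrow> nat \<Rightarrow> 'a) (e::nat \<Rightarrow> int).
           (\<forall>j<l. (\<forall>i<k. r j i \<in> Agz Ag (e j - d i)) \<and> (\<Sum>i<k. sm (r j i) (g i)) = 0) \<and>
           (\<forall>a. (\<Sum>i<k. sm (a i) (g i)) = 0 \<longrightarrow> (\<exists>b. \<forall>i<k. a i = (\<Sum>j<l. b j * r j i)))))"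

definition in_grA :: "(nat \<Rightarrow> 'a::comm_ring_1 set) \<Rightarrow> ('a \<Rightarrow> 'm::ab_group_add \<Rightarrow> 'm) \<Rightarrow>
    (int \<Rightarrow> 'm set) \<Rightarrow> bool" where
  "in_grA Ag sm Mg \<longleftrightarrow> graded_module Ag sm Mg \<and> fin_pres Ag sm Mg UNIV"

definition fg_graded_ideal :: "(nat \<Rightarrow> 'a::comm_ring_1 set) \<Rightarrow> 'a set \<Rightarrow> bool" where
  "fg_graded_ideal Ag I \<longleftrightarrow>
     (\<exists>(k::nat) h. (\<forall>i<k. homogeneous Ag (h i)) \<and> I = {\<Sum>i<k. a i * h i | a. True})"

definition coherent :: "(nat \<Rightarrow> 'a::comm_ring_1 set) \<Rightarrow> bool" where
  "coherent Ag \<longleftrightarrow> (\<forall>I. fg_graded_ideal Ag I \<longrightarrow> fin_pres Ag (*) (Agz Ag) I)"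

end

(*
  Since E is indecomposable and injective, any two nonzero homogeneous elements of E have a
  common nonzero multiple. Hence the annihilators of the nonzero homogeneous elements of E form
  a directed family, and their sum P(E) is just their union.

  For an injective X, Hom(M, X) is nonzero iff there are a homogeneous m in M and a nonzero
  homogeneous z in X with ann m contained in ann z: map A m onto A z and extend. For X = E_P the
  element z can be taken to be the image of 1 + P, whose annihilator is P; this gives one
  direction. Conversely, as A/P is essential in E_P, we may assume z = a + P with a homogeneous,
  a not in P and (ann m) a contained in P. Since M is finitely presented and A coherent, ann m is
  finitely generated, by b_1, ..., b_L say. The finitely many elements b_j a of P(E) annihilate a
  common nonzero homogeneous x in E, and then z' = a x is nonzero with ann m contained in ann z'.
*)
theory Submission
  imports Defs
begin

section \<open>Homogeneous components\<close>

lemma add_subgroup_zero: "add_subgroup S \<Longrightarrow> 0 \<in> S"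
  by (simp add: add_subgroup_def)

lemma add_subgroup_add: "add_subgroup S \<Longrightarrow> x \<in> S \<Longrightarrow> y \<in> S \<Longrightarrow> x + y \<in> S"
  by (simp add: add_subgroup_def)

lemma add_subgroup_diff: "add_subgroup S \<Longrightarrow> x \<in> S \<Longrightarrow> y \<in> S \<Longrightarrow> x - y \<in> S"
  unfolding add_subgroup_def by (metis diff_conv_add_uminus)

lemma add_subgroup_sum: "add_subgroup S \<Longrightarrow> (\<And>i. i \<in> I \<Longrightarrow> f i \<in> S) \<Longrightarrow> sum f I \<in> S"
  by (induction I rule: infinite_finite_induct) (auto simp: add_subgroup_zero add_subgroup_add)

definition component :: "('i \<Rightarrow> 'm::ab_group_add set) \<Rightarrow> 'm \<Rightarrow> 'i \<Rightarrow> 'm" where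
  "component G x = (THE c. (\<forall>i. c i \<in> G i) \<and> finite {i. c i \<noteq> 0} \<and> x = (\<Sum>i\<in>{i. c i \<noteq> 0}. c i))"

locale graded_decomp =
  fixes G :: "'i \<Rightarrow> 'm::ab_group_add set"
  assumes dsum: "dsum_decomp G" and subgroup: "\<And>i. add_subgroup (G i)"
begin

lemma zero_in [simp]: "0 \<in> G i"
  using subgroup add_subgroup_zero by blast

lemma component_spec:
  "(\<forall>i. component G x i \<in> G i) \<and> finite {i. component G x i \<noteq> 0} \<and>
   x = (\<Sum>i\<in>{i. component G x i \<noteq> 0}. component G x i)"
  unfolding component_def using dsum[unfolded dsum_decomp_def, rule_format, of x] by (rule theI')

lemma component_in [simp]: "component G x i \<in> G i"
  using component_spec by blast

lemma finite_component_support [simp]: "finite {i. component G x i \<noteq> 0}"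
  using component_spec by blast

lemma sum_components: "x = (\<Sum>i\<in>{i. component G x i \<noteq> 0}. component G x i)"
  using component_spec by blast

lemma component_unique:
  assumes "\<And>i. c i \<in> G i" "finite {i. c i \<noteq> 0}" "x = (\<Sum>i\<in>{i. c i \<noteq> 0}. c i)"
  shows "component G x = c"
  using dsum[unfolded dsum_decomp_def, rule_format, of x] component_spec[of x] assms by blast

lemma component_finite_sum:
  assumes "finite D" "\<And>i. i \<in> D \<Longrightarrow> c i \<in> G i"
  shows "component G (\<Sum>i\<in>D. c i) i = (if i \<in> D then c i else 0)"
proof -
  define c' where "c' i = (if i \<in> D then c i else 0)" for i
  have "(\<Sum>i\<in>{i. c' i \<noteq> 0}. c' i) = (\<Sum>i\<in>D. c' i)"
    by (rule sum.mono_neutral_left) (use assms in \<open>auto simp: c'_def\<close>)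
  also have "\<dots> = (\<Sum>i\<in>D. c i)"
    by (simp add: c'_def)
  finally have "component G (\<Sum>i\<in>D. c i) = c'"
    by (intro component_unique) (use assms in \<open>auto simp: c'_def intro: finite_subset[of _ D]\<close>)
  then show ?thesis
    by (simp add: c'_def)
qed

lemma sum_components_superset:
  assumes "finite D" "{i. component G x i \<noteq> 0} \<subseteq> D"
  shows "x = (\<Sum>i\<in>D. component G x i)"
proof -
  have "(\<Sum>i\<in>{i. component G x i \<noteq> 0}. component G x i) = (\<Sum>i\<in>D. component G x i)"
    by (rule sum.mono_neutral_left) (use assms in auto)
  then show ?thesis
    using sum_components by simp
qed

lemma component_homogeneous: "x \<in> G n \<Longrightarrow> component G x i = (if i = n then x else 0)"
  using component_finite_sum[of "{n}" "\<lambda>_. x"] by auto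

lemma component_zero [simp]: "component G 0 i = 0"
  using component_homogeneous[OF zero_in] by simp

lemma component_add: "component G (x + y) i = component G x i + component G y i"
proof -
  let ?D = "{i. component G x i \<noteq> 0} \<union> {i. component G y i \<noteq> 0}"
  have "x = (\<Sum>i\<in>?D. component G x i)" "y = (\<Sum>i\<in>?D. component G y i)"
    by (auto intro: sum_components_superset)
  then have "x + y = (\<Sum>i\<in>?D. component G x i + component G y i)"
    by (simp add: sum.distrib)
  then have "component G (x + y) i = (if i \<in> ?D then component G x i + component G y i else 0)"
    by (simp only:) (rule component_finite_sum, auto intro: add_subgroup_add[OF subgroup])
  then show ?thesis
    by auto
qed

lemma component_sum: "component G (\<Sum>j\<in>J. f j) i = (\<Sum>j\<in>J. component G (f j) i)"
  by (induction J rule: infinite_finite_induct) (auto simp: component_add)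

lemma ex_component_nonzero:
  assumes "x \<noteq> 0"
  shows "\<exists>i. component G x i \<noteq> 0"
proof (rule ccontr)
  assume "\<nexists>i. component G x i \<noteq> 0"
  then have "{i. component G x i \<noteq> 0} = {}"
    by blast
  then show False
    using sum_components[of x] assms by simp
qed

lemma component_sum_reindex:
  assumes "finite D" "inj h" "\<And>j. j \<in> D \<Longrightarrow> c j \<in> G (h j)"
  shows "component G (\<Sum>j\<in>D. c j) (h j) = (if j \<in> D then c j else 0)"
proof -
  have inj_D: "inj_on h D"
    using assms(2) by (rule inj_on_subset) simp
  have "(\<Sum>j\<in>D. c j) = (\<Sum>i\<in>h ` D. c (the_inv_into D h i))"
    by (simp add: sum.reindex[OF inj_D] the_inv_into_f_f[OF inj_D])
  also have "component G \<dots> (h j) = (if h j \<in> h ` D then c (the_inv_into D h (h j)) else 0)"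
    using assms by (intro component_finite_sum) (auto simp: the_inv_into_f_f[OF inj_D])
  finally show ?thesis
    using assms(2) by (auto simp: the_inv_into_f_f[OF inj_D] inj_image_mem_iff)
qed

end

lemma support_reindex:
  fixes c :: "'j \<Rightarrow> 'm::comm_monoid_add"
  assumes h: "inj h" and out: "\<And>j. j \<notin> range h \<Longrightarrow> c j = 0"
  shows "(\<Sum>j\<in>{j. c j \<noteq> 0}. c j) = (\<Sum>i\<in>{i. c (h i) \<noteq> 0}. c (h i))"
    and "finite {j. c j \<noteq> 0} \<longleftrightarrow> finite {i. c (h i) \<noteq> 0}"
proof -
  have supp: "{j. c j \<noteq> 0} = h ` {i. c (h i) \<noteq> 0}"
    using out by (auto simp: image_iff) (metis rangeE)
  show "(\<Sum>j\<in>{j. c j \<noteq> 0}. c j) = (\<Sum>i\<in>{i. c (h i) \<noteq> 0}. c (h i))"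
    unfolding supp by (rule sum.reindex_cong[OF inj_on_subset[OF h]]) auto
  show "finite {j. c j \<noteq> 0} \<longleftrightarrow> finite {i. c (h i) \<noteq> 0}"
    unfolding supp using finite_image_iff[OF inj_on_subset[OF h]] by blast
qed

lemma graded_decomp_reindex:
  fixes G :: "'i \<Rightarrow> 'm::ab_group_add set" and G' :: "'j \<Rightarrow> 'm set"
  assumes G: "graded_decomp G" and h: "inj h"
    and G'_h: "\<And>i. G' (h i) = G i" and G'_out: "\<And>j. j \<notin> range h \<Longrightarrow> G' j = {0}"
  shows "graded_decomp G'"
proof
  interpret graded_decomp G by fact
  show "add_subgroup (G' j)" for j
  proof (cases "j \<in> range h")
    case True
    then show ?thesis
      using subgroup G'_h by auto
  next
    case False
    then show ?thesis
      by (simp add: G'_out add_subgroup_def)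
  qed
  show "dsum_decomp G'"
    unfolding dsum_decomp_def
  proof
    fix x
    define c' where "c' j = (if j \<in> range h then component G x (inv h j) else 0)" for j
    have c'_h: "c' (h i) = component G x i" for i
      using h by (simp add: c'_def)
    have c'_out: "c' j = 0" if "j \<notin> range h" for j
      using that by (simp add: c'_def)
    show "\<exists>!c. (\<forall>j. c j \<in> G' j) \<and> finite {j. c j \<noteq> 0} \<and> x = (\<Sum>j\<in>{j. c j \<noteq> 0}. c j)"
    proof (rule ex1I[of _ c'], intro conjI allI)
      show "c' j \<in> G' j" for j
        by (cases "j \<in> range h") (auto simp: c'_h G'_h c'_out G'_out)
      show "finite {j. c' j \<noteq> 0}"
        using support_reindex(2)[OF h c'_out] by (simp add: c'_h)
      show "x = (\<Sum>j\<in>{j. c' j \<noteq> 0}. c' j)"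
        using support_reindex(1)[OF h c'_out] sum_components[of x] by (simp add: c'_h)
    next
      fix c assume c: "(\<forall>j. c j \<in> G' j) \<and> finite {j. c j \<noteq> 0} \<and> x = (\<Sum>j\<in>{j. c j \<noteq> 0}. c j)"
      then have out: "c j = 0" if "j \<notin> range h" for j
        using that G'_out by blast
      have "component G x = (\<lambda>i. c (h i))"
        using c support_reindex[OF h out] by (intro component_unique) (auto simp: G'_h[symmetric])
      then show "c = c'"
        using out by (auto simp: fun_eq_iff c'_def f_inv_into_f)
    qed
  qed
qed

lemma component_reindex:
  assumes "graded_decomp G" "graded_decomp G'" "inj h"
    and "\<And>i. G' (h i) = G i" "\<And>j. j \<notin> range h \<Longrightarrow> G' j = {0}"
  shows "component G' x (h i) = component G x i"
proof -
  interpret G: graded_decomp G by fact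
  interpret G': graded_decomp G' by fact
  have "x = (\<Sum>i\<in>{i. component G x i \<noteq> 0}. component G x i)"
    by (rule G.sum_components)
  then show ?thesis
    using G'.component_sum_reindex[of "{i. component G x i \<noteq> 0}" h "component G x" i] assms
    by auto
qed

lemma graded_decomp_shift:
  fixes G :: "int \<Rightarrow> 'm::ab_group_add set"
  assumes "graded_decomp G"
  shows "graded_decomp (\<lambda>n. G (n - d))" and "component (\<lambda>n. G (n - d)) x n = component G x (n - d)"
proof -
  have inj: "inj (\<lambda>n::int. n + d)"
    by (simp add: inj_def)
  have surj: "j \<in> range (\<lambda>n. n + d)" for j
    by (rule range_eqI[of _ _ "j - d"]) simp
  show shifted: "graded_decomp (\<lambda>n. G (n - d))"
    by (rule graded_decomp_reindex[OF assms inj]) (use surj in auto)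
  show "component (\<lambda>n. G (n - d)) x n = component G x (n - d)"
    using component_reindex[OF assms shifted inj, of x "n - d"] surj by simp
qed

lemma graded_decomp_Agz: "graded_ring Ag \<Longrightarrow> graded_decomp (Agz Ag)"
  by (rule graded_decomp_reindex[of Ag int])
    (auto simp: graded_ring_def graded_decomp_def Agz_def inj_def image_iff
          intro: nonneg_int_cases)

lemma Agz_mult:
  assumes "graded_ring Ag" "a \<in> Agz Ag i" "b \<in> Agz Ag j"
  shows "a * b \<in> Agz Ag (i + j)"
proof (cases "0 \<le> i \<and> 0 \<le> j")
  case True
  then have "a * b \<in> Ag (nat i + nat j)"
    using assms by (simp add: Agz_def graded_ring_def)
  then show ?thesis
    using True by (simp add: Agz_def nat_add_distrib)
next
  case False
  then have "a * b = 0"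
    using assms(2,3) by (auto simp: Agz_def split: if_splits)
  then show ?thesis
    using graded_decomp.zero_in[OF graded_decomp_Agz[OF assms(1)]] by simp
qed

lemma one_in_Agz: "graded_ring Ag \<Longrightarrow> 1 \<in> Agz Ag 0"
  by (simp add: graded_ring_def Agz_def)

section \<open>Graded modules, submodules and homomorphisms\<close>

locale gr_module =
  fixes Ag :: "nat \<Rightarrow> 'a::comm_ring_1 set" and sm :: "'a \<Rightarrow> 'm::ab_group_add \<Rightarrow> 'm"
    and Mg :: "int \<Rightarrow> 'm set"
  assumes ring: "graded_ring Ag" and module: "graded_module Ag sm Mg"
begin

sublocale graded_decomp Mg
  using module by unfold_locales (auto simp: graded_module_def)

sublocale A: graded_decomp "Agz Ag"
  using graded_decomp_Agz[OF ring] .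

lemma sm_add_left: "sm (a + b) x = sm a x + sm b x"
  using module by (simp add: graded_module_def)

lemma sm_add_right: "sm a (x + y) = sm a x + sm a y"
  using module by (simp add: graded_module_def)

lemma sm_mult: "sm (a * b) x = sm a (sm b x)"
  using module by (simp add: graded_module_def)

lemma sm_one [simp]: "sm 1 x = x"
  using module by (simp add: graded_module_def)

lemma sm_zero_left [simp]: "sm 0 x = 0"
  using sm_add_left[of 0 0 x] by simp

lemma sm_zero_right [simp]: "sm a 0 = 0"
  using sm_add_right[of a 0 0] by simp

lemma sm_minus_left: "sm (- a) x = - sm a x"
  using sm_add_left[of a "- a" x] by (simp add: eq_neg_iff_add_eq_0 add.commute)

lemma sm_diff_left: "sm (a - b) x = sm a x - sm b x"
  using sm_add_left[of a "- b" x] sm_minus_left[of b x] by simp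

lemma sm_sum_left: "sm (\<Sum>i\<in>I. f i) x = (\<Sum>i\<in>I. sm (f i) x)"
  by (induction I rule: infinite_finite_induct) (auto simp: sm_add_left)

lemma sm_sum_right: "sm a (\<Sum>i\<in>I. f i) = (\<Sum>i\<in>I. sm a (f i))"
  by (induction I rule: infinite_finite_induct) (auto simp: sm_add_right)

lemma sm_commute: "sm a (sm b x) = sm b (sm a x)"
  by (metis sm_mult mult.commute)

lemma sm_in_Mg:
  assumes "a \<in> Agz Ag j" "x \<in> Mg n"
  shows "sm a x \<in> Mg (j + n)"
proof (cases "0 \<le> j")
  case True
  then have "a \<in> Ag (nat j)"
    using assms(1) by (simp add: Agz_def)
  then have "sm a x \<in> Mg (int (nat j) + n)"
    using module assms(2) unfolding graded_module_def by blast
  then show ?thesis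
    using True by simp
next
  case False
  then show ?thesis
    using assms(1) by (simp add: Agz_def)
qed

lemma component_sm:
  assumes "x \<in> Mg n"
  shows "component Mg (sm a x) t = sm (component (Agz Ag) a (t - n)) x"
proof -
  let ?D = "{j. component (Agz Ag) a j \<noteq> 0}"
  have "sm a x = (\<Sum>j\<in>?D. sm (component (Agz Ag) a j) x)"
    by (subst A.sum_components) (simp add: sm_sum_left)
  moreover have "component Mg (\<Sum>j\<in>?D. sm (component (Agz Ag) a j) x) ((t - n) + n) =
      (if t - n \<in> ?D then sm (component (Agz Ag) a (t - n)) x else 0)"
    by (rule component_sum_reindex) (auto simp: inj_def intro: sm_in_Mg assms)
  ultimately show ?thesis
    by auto
qed

lemma gr_module_shift: "gr_module Ag sm (\<lambda>n. Mg (n - d))"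
proof
  have "sm a x \<in> Mg (int i + n - d)" if "a \<in> Ag i" "x \<in> Mg (n - d)" for a x i n
  proof -
    have "sm a x \<in> Mg (int i + (n - d))"
      using module that unfolding graded_module_def by blast
    then show ?thesis
      by (simp add: add_diff_eq)
  qed
  moreover have "graded_decomp (\<lambda>n. Mg (n - d))"
    by (rule graded_decomp_shift) unfold_locales
  ultimately show "graded_module Ag sm (\<lambda>n. Mg (n - d))"
    using module by (simp add: graded_module_def graded_decomp_def)
qed (rule ring)

end

lemma gr_module_ring:
  assumes "graded_ring Ag"
  shows "gr_module Ag (*) (\<lambda>n. Agz Ag (n - s))"
proof -
  have "gr_module Ag (*) (Agz Ag)"
  proof
    show "graded_module Ag (*) (Agz Ag)"
      unfolding graded_module_def
    proof (intro conjI allI ballI)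
      show "add_subgroup (Agz Ag n)" for n
        using graded_decomp.subgroup[OF graded_decomp_Agz[OF assms]] .
      show "dsum_decomp (Agz Ag)"
        using graded_decomp.dsum[OF graded_decomp_Agz[OF assms]] .
      show "a * x \<in> Agz Ag (int i + n)" if "a \<in> Ag i" "x \<in> Agz Ag n" for a x i n
        using Agz_mult[OF assms _ that(2), of a "int i"] that(1) by (simp add: Agz_def)
    qed (simp_all add: distrib_right distrib_left mult.assoc)
  qed (rule assms)
  then show ?thesis
    by (rule gr_module.gr_module_shift)
qed

context gr_module
begin

lemma graded_submodule_iff:
  "graded_submodule sm Mg S \<longleftrightarrow>
     add_subgroup S \<and> (\<forall>a. \<forall>x\<in>S. sm a x \<in> S) \<and> (\<forall>x\<in>S. \<forall>n. component Mg x n \<in> S)"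
proof -
  have "(\<exists>c. (\<forall>n. c n \<in> S \<inter> Mg n) \<and> finite {n. c n \<noteq> 0} \<and> x = (\<Sum>n\<in>{n. c n \<noteq> 0}. c n))
      \<longleftrightarrow> (\<forall>n. component Mg x n \<in> S)" for x
  proof
    assume "\<exists>c. (\<forall>n. c n \<in> S \<inter> Mg n) \<and> finite {n. c n \<noteq> 0} \<and> x = (\<Sum>n\<in>{n. c n \<noteq> 0}. c n)"
    then obtain c where c: "\<forall>n. c n \<in> S \<inter> Mg n" "finite {n. c n \<noteq> 0}" "x = (\<Sum>n\<in>{n. c n \<noteq> 0}. c n)"
      by blast
    then have "component Mg x = c"
      by (intro component_unique) auto
    then show "\<forall>n. component Mg x n \<in> S"
      using c(1) by simp
  next
    assume "\<forall>n. component Mg x n \<in> S"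
    then show "\<exists>c. (\<forall>n. c n \<in> S \<inter> Mg n) \<and> finite {n. c n \<noteq> 0} \<and> x = (\<Sum>n\<in>{n. c n \<noteq> 0}. c n)"
      using sum_components[of x] by (intro exI[of _ "component Mg x"]) auto
  qed
  then show ?thesis
    unfolding graded_submodule_def by blast
qed

lemma graded_submoduleI:
  assumes "0 \<in> S" "\<And>x y. x \<in> S \<Longrightarrow> y \<in> S \<Longrightarrow> x + y \<in> S" "\<And>a x. x \<in> S \<Longrightarrow> sm a x \<in> S"
    and "\<And>x n. x \<in> S \<Longrightarrow> component Mg x n \<in> S"
  shows "graded_submodule sm Mg S"
proof -
  have "- x \<in> S" if "x \<in> S" for x
    using assms(3)[OF that, of "- 1"] by (simp add: sm_minus_left)
  then show ?thesis
    unfolding graded_submodule_iff add_subgroup_def using assms by blast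
qed

lemma gsub_zero: "graded_submodule sm Mg S \<Longrightarrow> 0 \<in> S"
  by (simp add: graded_submodule_iff add_subgroup_def)

lemma gsub_add: "graded_submodule sm Mg S \<Longrightarrow> x \<in> S \<Longrightarrow> y \<in> S \<Longrightarrow> x + y \<in> S"
  by (simp add: graded_submodule_iff add_subgroup_def)

lemma gsub_diff: "graded_submodule sm Mg S \<Longrightarrow> x \<in> S \<Longrightarrow> y \<in> S \<Longrightarrow> x - y \<in> S"
  by (simp add: graded_submodule_iff add_subgroup_diff)

lemma gsub_sm: "graded_submodule sm Mg S \<Longrightarrow> x \<in> S \<Longrightarrow> sm a x \<in> S"
  by (simp add: graded_submodule_iff)

lemma gsub_component: "graded_submodule sm Mg S \<Longrightarrow> x \<in> S \<Longrightarrow> component Mg x n \<in> S"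
  by (simp add: graded_submodule_iff)

lemma gsub_sum: "graded_submodule sm Mg S \<Longrightarrow> (\<And>i. i \<in> I \<Longrightarrow> f i \<in> S) \<Longrightarrow> sum f I \<in> S"
  by (simp add: graded_submodule_iff add_subgroup_sum)

lemma gsub_singleton_zero: "graded_submodule sm Mg {0}"
  by (rule graded_submoduleI) auto

lemma gsub_cyclic:
  assumes "x \<in> Mg s"
  shows "graded_submodule sm Mg (range (\<lambda>a. sm a x))"
proof (rule graded_submoduleI)
  show "0 \<in> range (\<lambda>a. sm a x)"
    by (rule range_eqI[of _ _ 0]) simp
  show "y + z \<in> range (\<lambda>a. sm a x)" if "y \<in> range (\<lambda>a. sm a x)" "z \<in> range (\<lambda>a. sm a x)" for y z
    using that by (auto intro: range_eqI simp flip: sm_add_left)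
  show "sm b y \<in> range (\<lambda>a. sm a x)" if "y \<in> range (\<lambda>a. sm a x)" for b y
    using that by (auto intro: range_eqI simp flip: sm_mult)
  show "component Mg y n \<in> range (\<lambda>a. sm a x)" if "y \<in> range (\<lambda>a. sm a x)" for y n
    using that by (auto simp: component_sm[OF assms])
qed

lemma gsub_plus:
  assumes S: "graded_submodule sm Mg S" and T: "graded_submodule sm Mg T"
  shows "graded_submodule sm Mg {s + t | s t. s \<in> S \<and> t \<in> T}" (is "graded_submodule sm Mg ?ST")
proof (rule graded_submoduleI)
  have "0 + 0 \<in> ?ST"
    using gsub_zero[OF S] gsub_zero[OF T] by blast
  then show "0 \<in> ?ST"
    by simp
  show "x + y \<in> ?ST" if xy: "x \<in> ?ST" "y \<in> ?ST" for x y
  proof -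
    obtain s t s' t' where st: "x = s + t" "y = s' + t'" "s \<in> S" "t \<in> T" "s' \<in> S" "t' \<in> T"
      using xy by blast
    then have "x + y = (s + s') + (t + t')"
      by (simp add: algebra_simps)
    then show ?thesis
      using st gsub_add[OF S] gsub_add[OF T] by blast
  qed
  show "sm a x \<in> ?ST" if x: "x \<in> ?ST" for a x
  proof -
    obtain s t where st: "x = s + t" "s \<in> S" "t \<in> T"
      using x by blast
    then have "sm a x = sm a s + sm a t"
      by (simp add: sm_add_right)
    then show ?thesis
      using st gsub_sm[OF S] gsub_sm[OF T] by blast
  qed
  show "component Mg x n \<in> ?ST" if x: "x \<in> ?ST" for x n
  proof -
    obtain s t where st: "x = s + t" "s \<in> S" "t \<in> T"
      using x by blast
    then have "component Mg x n = component Mg s n + component Mg t n"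
      by (simp add: component_add)
    then show ?thesis
      using st gsub_component[OF S] gsub_component[OF T] by blast
  qed
qed

lemma gsub_Union_chain:
  assumes "C \<noteq> {}" "\<And>S. S \<in> C \<Longrightarrow> graded_submodule sm Mg S"
    and "\<And>S T. S \<in> C \<Longrightarrow> T \<in> C \<Longrightarrow> S \<subseteq> T \<or> T \<subseteq> S"
  shows "graded_submodule sm Mg (\<Union>C)"
proof (rule graded_submoduleI)
  show "0 \<in> \<Union>C"
    using assms(1,2) gsub_zero by blast
  show "x + y \<in> \<Union>C" if xy: "x \<in> \<Union>C" "y \<in> \<Union>C" for x y
  proof -
    obtain S T where ST: "S \<in> C" "T \<in> C" "x \<in> S" "y \<in> T"
      using xy by blast
    then have "x + y \<in> S \<or> x + y \<in> T"
      using assms(3)[OF ST(1,2)] gsub_add[OF assms(2)] by blast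
    then show ?thesis
      using ST(1,2) by blast
  qed
  show "sm a x \<in> \<Union>C" if "x \<in> \<Union>C" for a x
    using that assms(2) gsub_sm by blast
  show "component Mg x n \<in> \<Union>C" if "x \<in> \<Union>C" for x n
    using that assms(2) gsub_component by blast
qed

lemma ex_maximal_gsub:
  assumes "graded_submodule sm Mg S0" "P S0"
    and "\<And>C. C \<noteq> {} \<Longrightarrow> (\<And>S. S \<in> C \<Longrightarrow> graded_submodule sm Mg S \<and> P S) \<Longrightarrow>
           (\<And>S T. S \<in> C \<Longrightarrow> T \<in> C \<Longrightarrow> S \<subseteq> T \<or> T \<subseteq> S) \<Longrightarrow> P (\<Union>C)"
  shows "\<exists>S. graded_submodule sm Mg S \<and> P S \<and>
    (\<forall>T. graded_submodule sm Mg T \<and> P T \<and> S \<subseteq> T \<longrightarrow> T = S)"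
proof -
  let ?A = "{S. graded_submodule sm Mg S \<and> P S}"
  have "\<exists>S\<in>?A. \<forall>T\<in>?A. S \<subseteq> T \<longrightarrow> T = S"
  proof (rule subset_Zorn_nonempty)
    show "?A \<noteq> {}"
      using assms(1,2) by blast
  next
    fix C assume C: "C \<noteq> {}" "subset.chain ?A C"
    then have "\<And>S. S \<in> C \<Longrightarrow> graded_submodule sm Mg S \<and> P S"
      and "\<And>S T. S \<in> C \<Longrightarrow> T \<in> C \<Longrightarrow> S \<subseteq> T \<or> T \<subseteq> S"
      unfolding subset_chain_def by blast+
    then show "\<Union>C \<in> ?A"
      using gsub_Union_chain[OF C(1)] assms(3)[OF C(1)] by blast
  qed
  then show ?thesis
    by blast
qed

lemma ex_homogeneous_notin:
  assumes "graded_submodule sm Mg S" "S \<noteq> UNIV"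
  shows "\<exists>x n. x \<in> Mg n \<and> x \<notin> S"
proof -
  obtain y where "y \<notin> S"
    using assms(2) by blast
  moreover have "y \<in> S" if "\<forall>n. component Mg y n \<in> S"
    using gsub_sum[OF assms(1), of "{n. component Mg y n \<noteq> 0}" "component Mg y"] that
    by (simp flip: sum_components)
  ultimately show ?thesis
    using component_in by blast
qed

end

lemma gr_hom_add: "gr_hom sm Mg sn Ng d f \<Longrightarrow> f (x + y) = f x + f y"
  by (simp add: gr_hom_def)

lemma gr_hom_sm: "gr_hom sm Mg sn Ng d f \<Longrightarrow> f (sm a x) = sn a (f x)"
  by (simp add: gr_hom_def)

lemma gr_hom_in: "gr_hom sm Mg sn Ng d f \<Longrightarrow> x \<in> Mg n \<Longrightarrow> f x \<in> Ng (n + d)"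
  unfolding gr_hom_def by blast

lemma gr_hom_zero: "gr_hom sm Mg sn Ng d f \<Longrightarrow> f 0 = 0"
  using gr_hom_add[of sm Mg sn Ng d f 0 0] by simp

lemma gr_hom_diff: "gr_hom sm Mg sn Ng d f \<Longrightarrow> f (x - y) = f x - f y"
  using gr_hom_add[of sm Mg sn Ng d f "x - y" y] by (simp add: eq_diff_eq)

lemma gr_hom_sum: "gr_hom sm Mg sn Ng d f \<Longrightarrow> f (\<Sum>i\<in>I. g i) = (\<Sum>i\<in>I. f (g i))"
  by (induction I rule: infinite_finite_induct) (auto simp: gr_hom_zero gr_hom_add)

lemma gr_hom_shift: "gr_hom sm Mg sn Ng d f \<longleftrightarrow> gr_hom sm (\<lambda>n. Mg (n - d)) sn Ng 0 f"
proof -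
  have "(\<forall>n. f ` Mg n \<subseteq> Ng (n + d)) \<longleftrightarrow> (\<forall>n. f ` Mg (n - d) \<subseteq> Ng n)"
  proof
    assume "\<forall>n. f ` Mg n \<subseteq> Ng (n + d)"
    then show "\<forall>n. f ` Mg (n - d) \<subseteq> Ng n"
      by (metis diff_add_cancel)
  next
    assume "\<forall>n. f ` Mg (n - d) \<subseteq> Ng n"
    then show "\<forall>n. f ` Mg n \<subseteq> Ng (n + d)"
      by (metis add_diff_cancel)
  qed
  then show ?thesis
    by (simp add: gr_hom_def)
qed

lemma hom_on_add: "hom_on S sn Ng se Eg f \<Longrightarrow> x \<in> S \<Longrightarrow> y \<in> S \<Longrightarrow> f (x + y) = f x + f y"
  by (simp add: hom_on_def)

lemma hom_on_sm: "hom_on S sn Ng se Eg f \<Longrightarrow> x \<in> S \<Longrightarrow> f (sn a x) = se a (f x)"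
  by (simp add: hom_on_def)

lemma hom_on_in: "hom_on S sn Ng se Eg f \<Longrightarrow> x \<in> S \<Longrightarrow> x \<in> Ng n \<Longrightarrow> f x \<in> Eg n"
  unfolding hom_on_def by blast

lemma hom_on_UNIV: "hom_on UNIV sn Ng se Eg f \<longleftrightarrow> gr_hom sn Ng se Eg 0 f"
  by (simp add: hom_on_def gr_hom_def)

lemma hom_on_diff:
  "hom_on S sn Ng se Eg f \<Longrightarrow> x - y \<in> S \<Longrightarrow> y \<in> S \<Longrightarrow> f (x - y) = f x - f y"
  using hom_on_add[of S sn Ng se Eg f "x - y" y] by (simp add: eq_diff_eq)

lemma gr_hom_component:
  assumes f: "gr_hom sm Mg sn Ng d f" and M: "graded_decomp Mg" and N: "graded_decomp Ng"
  shows "component Ng (f x) n = f (component Mg x (n - d))"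
proof -
  let ?D = "{i. component Mg x i \<noteq> 0}"
  have "f x = (\<Sum>i\<in>?D. f (component Mg x i))"
    by (subst graded_decomp.sum_components[OF M]) (simp add: gr_hom_sum[OF f])
  moreover have "component Ng (\<Sum>i\<in>?D. f (component Mg x i)) ((n - d) + d) =
      (if n - d \<in> ?D then f (component Mg x (n - d)) else 0)"
    by (rule graded_decomp.component_sum_reindex[OF N])
      (auto simp: inj_def graded_decomp.finite_component_support[OF M]
        intro: gr_hom_in[OF f] graded_decomp.component_in[OF M])
  ultimately show ?thesis
    using gr_hom_zero[OF f] by auto
qed

lemma (in gr_module) gsub_kernel:
  assumes f: "gr_hom sm Mg sn Ng d f" and N: "gr_module Ag sn Ng"
  shows "graded_submodule sm Mg {x. f x = 0}"
proof (rule graded_submoduleI)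
  interpret N: gr_module Ag sn Ng by fact
  show "component Mg x n \<in> {x. f x = 0}" if "x \<in> {x. f x = 0}" for x n
    using that gr_hom_component[OF f graded_decomp_axioms N.graded_decomp_axioms, of x "n + d"] by simp
  show "sm a x \<in> {x. f x = 0}" if "x \<in> {x. f x = 0}" for a x
    using that by (simp add: gr_hom_sm[OF f])
qed (auto simp: gr_hom_zero[OF f] gr_hom_add[OF f])

lemma (in gr_module) gsub_range:
  assumes "gr_hom sn Ng sm Mg d f" "graded_decomp Ng"
  shows "graded_submodule sm Mg (range f)"
proof (rule graded_submoduleI)
  show "0 \<in> range f"
    using gr_hom_zero[OF assms(1)] by (metis rangeI)
  show "component Mg y n \<in> range f" if "y \<in> range f" for y n
    using that gr_hom_component[OF assms(1,2) graded_decomp_axioms] by auto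
qed (auto simp: gr_hom_add[OF assms(1), symmetric] gr_hom_sm[OF assms(1), symmetric])

section \<open>Baer's criterion\<close>

lemma hom_on_cong:
  assumes "hom_on T sn Ng se Eg h" "\<And>z. z \<in> T \<Longrightarrow> h' z = h z"
    and "\<And>x y. x \<in> T \<Longrightarrow> y \<in> T \<Longrightarrow> x + y \<in> T" "\<And>a x. x \<in> T \<Longrightarrow> sn a x \<in> T"
  shows "hom_on T sn Ng se Eg h'"
  unfolding hom_on_def
proof (intro conjI ballI allI)
  show "h' (x + y) = h' x + h' y" if "x \<in> T" "y \<in> T" for x y
    using that assms(2,3) hom_on_add[OF assms(1) that] by simp
  show "h' (sn a x) = se a (h' x)" if "x \<in> T" for a x
    using that assms(2,4) hom_on_sm[OF assms(1) that] by simp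
  show "h' ` (T \<inter> Ng n) \<subseteq> Eg n" for n
    using assms(2) hom_on_in[OF assms(1)] by auto
qed

lemma (in gr_module) gsub_colon:
  assumes T: "graded_submodule sm Mg T" and x: "x \<in> Mg s"
  shows "graded_submodule (*) (\<lambda>n. Agz Ag (n - s)) {a. sm a x \<in> T}"
proof -
  interpret R: gr_module Ag "(*)" "\<lambda>n. Agz Ag (n - s)"
    by (rule gr_module_ring[OF ring])
  show ?thesis
  proof (rule R.graded_submoduleI)
    fix a n assume "a \<in> {a. sm a x \<in> T}"
    then show "component (\<lambda>n. Agz Ag (n - s)) a n \<in> {a. sm a x \<in> T}"
      using gsub_component[OF T, of "sm a x" n]
      by (simp add: graded_decomp_shift(2)[OF A.graded_decomp_axioms] component_sm[OF x])
  qed (use gsub_zero[OF T] gsub_add[OF T] gsub_sm[OF T] in \<open>simp_all add: sm_add_left sm_mult\<close>)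
qed

lemma (in gr_module) ex_baer_element:
  fixes se :: "'a \<Rightarrow> 'e::ab_group_add \<Rightarrow> 'e"
  assumes inj: "gr_injective TYPE('a) Ag se Eg"
    and T: "graded_submodule sm Mg T" and h: "hom_on T sm Mg se Eg h" and x: "x \<in> Mg s"
  shows "\<exists>y\<in>Eg s. \<forall>a. sm a x \<in> T \<longrightarrow> h (sm a x) = se a y"
proof -
  define Rg where "Rg n = Agz Ag (n - s)" for n
  interpret R: gr_module Ag "(*)" Rg
    unfolding Rg_def by (rule gr_module_ring[OF ring])
  define I where "I = {a. sm a x \<in> T}"
  have I: "graded_submodule (*) Rg I"
    unfolding I_def Rg_def by (rule gsub_colon[OF T x])
  have hI: "hom_on I (*) Rg se Eg (\<lambda>a. h (sm a x))"
    unfolding hom_on_def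
  proof (intro conjI ballI allI)
    show "h (sm (a + b) x) = h (sm a x) + h (sm b x)" if "a \<in> I" "b \<in> I" for a b
      using that hom_on_add[OF h] by (simp add: I_def sm_add_left)
    show "h (sm (b * a) x) = se b (h (sm a x))" if "a \<in> I" for a b
      using that hom_on_sm[OF h] by (simp add: I_def sm_mult)
    show "(\<lambda>a. h (sm a x)) ` (I \<inter> Rg n) \<subseteq> Eg n" for n
    proof
      fix w assume "w \<in> (\<lambda>a. h (sm a x)) ` (I \<inter> Rg n)"
      then obtain a where a: "sm a x \<in> T" "a \<in> Agz Ag (n - s)" and w: "w = h (sm a x)"
        by (auto simp: I_def Rg_def)
      have "sm a x \<in> Mg n"
        using sm_in_Mg[OF a(2) x] by simp
      then show "w \<in> Eg n"
        using hom_on_in[OF h a(1)] w by simp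
    qed
  qed
  obtain g where g: "gr_hom (*) Rg se Eg 0 g" and gI: "\<forall>a\<in>I. g a = h (sm a x)"
    using inj[unfolded gr_injective_def, rule_format, OF conjI[OF R.module conjI[OF I hI]]] by blast
  have "g 1 \<in> Eg s"
    using gr_hom_in[OF g, of 1 s] one_in_Agz[OF ring] by (simp add: Rg_def)
  moreover have "h (sm a x) = se a (g 1)" if "sm a x \<in> T" for a
    using gI that gr_hom_sm[OF g, of a 1] by (simp add: I_def)
  ultimately show ?thesis
    by blast
qed

lemma (in gr_module) ex_extension_by_cyclic:
  fixes se :: "'a \<Rightarrow> 'e::ab_group_add \<Rightarrow> 'e"
  assumes E: "gr_module Ag se Eg" and T: "graded_submodule sm Mg T" and h: "hom_on T sm Mg se Eg h"
    and compat: "\<And>a. sm a x \<in> T \<Longrightarrow> h (sm a x) = se a y"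
  shows "\<exists>h'. \<forall>t\<in>T. \<forall>a. h' (t + sm a x) = h t + se a y"
proof -
  interpret E: gr_module Ag se Eg by fact
  have well_defined: "h t + se a y = h t' + se a' y"
    if "t \<in> T" "t' \<in> T" "t + sm a x = t' + sm a' x" for t t' a a'
  proof -
    have "sm (a - a') x = t' - t"
      using that(3) by (simp add: sm_diff_left algebra_simps)
    then have "h (t' - t) = se (a - a') y"
      using compat[of "a - a'"] gsub_diff[OF T that(2,1)] by simp
    moreover have "h (t' - t) = h t' - h t"
      by (rule hom_on_diff[OF h gsub_diff[OF T that(2,1)] that(1)])
    ultimately show ?thesis
      by (simp add: E.sm_diff_left algebra_simps)
  qed
  define h' where "h' z = (SOME w. \<exists>t a. t \<in> T \<and> z = t + sm a x \<and> w = h t + se a y)" for z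
  have "h' (t + sm a x) = h t + se a y" if "t \<in> T" for t a
  proof -
    have "\<exists>t' a'. t' \<in> T \<and> t + sm a x = t' + sm a' x \<and> h' (t + sm a x) = h t' + se a' y"
      unfolding h'_def by (rule someI[of _ "h t + se a y"]) (use that in blast)
    then show ?thesis
      using well_defined[OF that] by auto
  qed
  then show ?thesis
    by blast
qed

lemma (in gr_module) hom_on_sum_cyclic:
  fixes se :: "'a \<Rightarrow> 'e::ab_group_add \<Rightarrow> 'e"
  assumes E: "gr_module Ag se Eg" and T: "graded_submodule sm Mg T" and h: "hom_on T sm Mg se Eg h"
    and x: "x \<in> Mg s" and y: "y \<in> Eg s"
    and h'_eq: "\<And>t a. t \<in> T \<Longrightarrow> h' (t + sm a x) = h t + se a y"
  shows "hom_on {t + c | t c. t \<in> T \<and> c \<in> range (\<lambda>a. sm a x)} sm Mg se Eg h'"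
proof -
  interpret E: gr_module Ag se Eg by fact
  let ?T' = "{t + c | t c. t \<in> T \<and> c \<in> range (\<lambda>a. sm a x)}"
  have mem_T': "z \<in> ?T' \<longleftrightarrow> (\<exists>t a. t \<in> T \<and> z = t + sm a x)" for z
    by blast
  show "hom_on ?T' sm Mg se Eg h'"
    unfolding hom_on_def
  proof (intro conjI ballI allI)
    show "h' (z1 + z2) = h' z1 + h' z2" if z: "z1 \<in> ?T'" "z2 \<in> ?T'" for z1 z2
    proof -
      obtain t1 a1 t2 a2 where t: "t1 \<in> T" "t2 \<in> T" "z1 = t1 + sm a1 x" "z2 = t2 + sm a2 x"
        using z mem_T' by meson
      have "z1 + z2 = (t1 + t2) + sm (a1 + a2) x"
        using t(3,4) by (simp add: sm_add_left algebra_simps)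
      then have "h' (z1 + z2) = h (t1 + t2) + se (a1 + a2) y"
        using h'_eq[OF gsub_add[OF T t(1,2)]] by simp
      also have "\<dots> = h' z1 + h' z2"
        using t h'_eq hom_on_add[OF h t(1,2)] by (simp add: E.sm_add_left algebra_simps)
      finally show ?thesis .
    qed
    show "h' (sm b z) = se b (h' z)" if z: "z \<in> ?T'" for b z
    proof -
      obtain t a where t: "t \<in> T" "z = t + sm a x"
        using z mem_T' by meson
      have "sm b z = sm b t + sm (b * a) x"
        using t(2) by (simp add: sm_add_right sm_mult)
      then have "h' (sm b z) = h (sm b t) + se (b * a) y"
        using h'_eq[OF gsub_sm[OF T t(1)]] by simp
      also have "\<dots> = se b (h' z)"
        using t h'_eq hom_on_sm[OF h t(1)] by (simp add: E.sm_add_right E.sm_mult)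
      finally show ?thesis .
    qed
    show "h' ` (?T' \<inter> Mg n) \<subseteq> Eg n" for n
    proof
      fix w assume "w \<in> h' ` (?T' \<inter> Mg n)"
      then obtain t a where t: "t \<in> T" "t + sm a x \<in> Mg n" and w: "w = h' (t + sm a x)"
        using mem_T' by auto
      let ?a = "component (Agz Ag) a (n - s)"
      have "t + sm a x = component Mg t n + sm ?a x"
        using component_homogeneous[OF t(2), of n] by (simp add: component_add component_sm[OF x])
      then have "w = h (component Mg t n) + se ?a y"
        using w h'_eq[OF gsub_component[OF T t(1)]] by simp
      moreover have "h (component Mg t n) \<in> Eg n"
        using hom_on_in[OF h gsub_component[OF T t(1)] component_in] .
      moreover have "se ?a y \<in> Eg n"
        using E.sm_in_Mg[OF A.component_in y, of a "n - s"] by simp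
      ultimately show "w \<in> Eg n"
        using add_subgroup_add[OF E.subgroup] by simp
    qed
  qed
qed

definition graph_on :: "'u set \<Rightarrow> ('u \<Rightarrow> 'e) \<Rightarrow> ('u \<times> 'e) set" where
  "graph_on T h = (\<lambda>z. (z, h z)) ` T"

definition rel_apply :: "('u \<times> 'e) set \<Rightarrow> 'u \<Rightarrow> 'e" where
  "rel_apply G z = (THE w. (z, w) \<in> G)"

lemma rel_apply_eq: "single_valued G \<Longrightarrow> (z, w) \<in> G \<Longrightarrow> rel_apply G z = w"
  unfolding rel_apply_def by (blast dest: single_valuedD)

lemma rel_apply_in: "single_valued G \<Longrightarrow> z \<in> Domain G \<Longrightarrow> (z, rel_apply G z) \<in> G"
  using rel_apply_eq by fastforce

lemma single_valued_graph_on: "single_valued (graph_on T h)"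
  by (auto simp: graph_on_def single_valued_def)

lemma Domain_graph_on [simp]: "Domain (graph_on T h) = T"
  by (force simp: graph_on_def)

lemma rel_apply_graph_on: "z \<in> T \<Longrightarrow> rel_apply (graph_on T h) z = h z"
  by (rule rel_apply_eq[OF single_valued_graph_on]) (simp add: graph_on_def)

lemma single_valued_Union_chain:
  assumes "\<And>G. G \<in> C \<Longrightarrow> single_valued G" and "\<And>G H. G \<in> C \<Longrightarrow> H \<in> C \<Longrightarrow> G \<subseteq> H \<or> H \<subseteq> G"
  shows "single_valued (\<Union>C)"
proof (rule single_valuedI)
  fix z w w' assume "(z, w) \<in> \<Union>C" "(z, w') \<in> \<Union>C"
  then obtain G H where "G \<in> C" "H \<in> C" "(z, w) \<in> G" "(z, w') \<in> H"
    by blast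
  then show "w = w'"
    using assms by (blast dest: single_valuedD)
qed

lemma rel_apply_Union:
  assumes "single_valued (\<Union>C)" "G \<in> C" "single_valued G" "z \<in> Domain G"
  shows "rel_apply (\<Union>C) z = rel_apply G z"
  using assms rel_apply_in[OF assms(3,4)] by (blast intro: rel_apply_eq)

lemma Domain_Union_chain_common:
  assumes "\<And>G H. G \<in> C \<Longrightarrow> H \<in> C \<Longrightarrow> G \<subseteq> H \<or> H \<subseteq> G"
    and "x \<in> Domain (\<Union>C)" "y \<in> Domain (\<Union>C)"
  shows "\<exists>G\<in>C. x \<in> Domain G \<and> y \<in> Domain G"
proof -
  obtain G H where "G \<in> C" "H \<in> C" "x \<in> Domain G" "y \<in> Domain H"
    using assms(2,3) by blast
  then show ?thesis
    using assms(1)[of G H] by (meson Domain_mono subsetD)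
qed

text \<open>Partial extensions of a map are handled through their graphs, which are ordered by
  inclusion, so that Zorn's lemma applies to them.\<close>

definition extension_graph ::
    "('a \<Rightarrow> 'u::ab_group_add \<Rightarrow> 'u) \<Rightarrow> (int \<Rightarrow> 'u set) \<Rightarrow> ('a \<Rightarrow> 'e::ab_group_add \<Rightarrow> 'e) \<Rightarrow>
      (int \<Rightarrow> 'e set) \<Rightarrow> 'u set \<Rightarrow> ('u \<Rightarrow> 'e) \<Rightarrow> ('u \<times> 'e) set \<Rightarrow> bool" where
  "extension_graph sn Ng se Eg S f G \<longleftrightarrow> single_valued G \<and> graded_submodule sn Ng (Domain G) \<and>
     S \<subseteq> Domain G \<and> hom_on (Domain G) sn Ng se Eg (rel_apply G) \<and> (\<forall>z\<in>S. rel_apply G z = f z)"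

context gr_module
begin

lemma extension_graph_graph_on:
  assumes "graded_submodule sm Mg T" "S \<subseteq> T" "hom_on T sm Mg se Eg h" "\<forall>z\<in>S. h z = f z"
  shows "extension_graph sm Mg se Eg S f (graph_on T h)"
  unfolding extension_graph_def Domain_graph_on
proof (intro conjI single_valued_graph_on assms(1,2))
  show "hom_on T sm Mg se Eg (rel_apply (graph_on T h))"
    by (rule hom_on_cong[OF assms(3)])
      (auto simp: rel_apply_graph_on gsub_add[OF assms(1)] gsub_sm[OF assms(1)])
  show "\<forall>z\<in>S. rel_apply (graph_on T h) z = f z"
    using assms(2,4) by (auto simp: rel_apply_graph_on)
qed

lemma hom_on_Union_chain:
  assumes chain: "\<And>G H. G \<in> C \<Longrightarrow> H \<in> C \<Longrightarrow> G \<subseteq> H \<or> H \<subseteq> G"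
    and sv: "\<And>G. G \<in> C \<Longrightarrow> single_valued G"
    and dom: "\<And>G. G \<in> C \<Longrightarrow> graded_submodule sm Mg (Domain G)"
    and hom: "\<And>G. G \<in> C \<Longrightarrow> hom_on (Domain G) sm Mg se Eg (rel_apply G)"
  shows "hom_on (Domain (\<Union>C)) sm Mg se Eg (rel_apply (\<Union>C))"
proof -
  have apply_Union: "rel_apply (\<Union>C) z = rel_apply G z" if "G \<in> C" "z \<in> Domain G" for G z
    by (rule rel_apply_Union[OF single_valued_Union_chain[OF sv chain] that(1) sv[OF that(1)] that(2)])
  show ?thesis
    unfolding hom_on_def
  proof (intro conjI ballI allI)
    fix x y assume "x \<in> Domain (\<Union>C)" "y \<in> Domain (\<Union>C)"
    then obtain G where "G \<in> C" "x \<in> Domain G" "y \<in> Domain G"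
      using Domain_Union_chain_common[OF chain] by blast
    then show "rel_apply (\<Union>C) (x + y) = rel_apply (\<Union>C) x + rel_apply (\<Union>C) y"
      using apply_Union hom_on_add[OF hom] gsub_add[OF dom] by simp
  next
    fix a x assume "x \<in> Domain (\<Union>C)"
    then obtain G where "G \<in> C" "x \<in> Domain G"
      by blast
    then show "rel_apply (\<Union>C) (sm a x) = se a (rel_apply (\<Union>C) x)"
      using apply_Union hom_on_sm[OF hom] gsub_sm[OF dom] by simp
  next
    fix n
    show "rel_apply (\<Union>C) ` (Domain (\<Union>C) \<inter> Mg n) \<subseteq> Eg n"
      using apply_Union hom_on_in[OF hom] by fastforce
  qed
qed

lemma extension_graph_Union_chain:
  assumes C: "C \<noteq> {}" "\<And>G. G \<in> C \<Longrightarrow> extension_graph sm Mg se Eg S f G"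
    and chain: "\<And>G H. G \<in> C \<Longrightarrow> H \<in> C \<Longrightarrow> G \<subseteq> H \<or> H \<subseteq> G"
  shows "extension_graph sm Mg se Eg S f (\<Union>C)"
proof -
  have sv: "single_valued G" and dom: "graded_submodule sm Mg (Domain G)" and sub: "S \<subseteq> Domain G"
    and hom: "hom_on (Domain G) sm Mg se Eg (rel_apply G)" and agree: "\<forall>z\<in>S. rel_apply G z = f z"
    if "G \<in> C" for G
    using C(2)[OF that] by (simp_all add: extension_graph_def)
  have sv_Union: "single_valued (\<Union>C)"
    by (rule single_valued_Union_chain[OF sv chain])
  have "graded_submodule sm Mg (\<Union>(Domain ` C))"
  proof (rule gsub_Union_chain)
    show "Domain ` C \<noteq> {}"
      using C(1) by blast
    show "graded_submodule sm Mg X" if "X \<in> Domain ` C" for X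
      using that dom by blast
    show "X \<subseteq> Y \<or> Y \<subseteq> X" if "X \<in> Domain ` C" "Y \<in> Domain ` C" for X Y
      using that chain by (metis Domain_mono imageE)
  qed
  moreover obtain G0 where G0: "G0 \<in> C"
    using C(1) by blast
  then have "S \<subseteq> Domain (\<Union>C)"
    using sub by blast
  moreover have "rel_apply (\<Union>C) z = f z" if "z \<in> S" for z
  proof -
    have "z \<in> Domain G0"
      using that sub[OF G0] by blast
    then show ?thesis
      using that rel_apply_Union[OF sv_Union G0 sv[OF G0]] agree[OF G0] by simp
  qed
  ultimately show ?thesis
    using sv_Union hom_on_Union_chain[OF chain sv dom hom]
    by (simp add: extension_graph_def Domain_Union)
qed

end

lemma (in gr_module) extension_graph_extend:
  fixes se :: "'a \<Rightarrow> 'e::ab_group_add \<Rightarrow> 'e"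
  assumes E: "gr_module Ag se Eg" and inj: "gr_injective TYPE('a) Ag se Eg"
    and G: "extension_graph sm Mg se Eg S f G" and x: "x \<in> Mg s" "x \<notin> Domain G"
  shows "\<exists>H. extension_graph sm Mg se Eg S f H \<and> G \<subseteq> H \<and> x \<in> Domain H"
proof -
  have sv: "single_valued G" and dom: "graded_submodule sm Mg (Domain G)" and S: "S \<subseteq> Domain G"
    and hom: "hom_on (Domain G) sm Mg se Eg (rel_apply G)" and agree: "\<forall>z\<in>S. rel_apply G z = f z"
    using G by (simp_all add: extension_graph_def)
  let ?T' = "{t + c |t c. t \<in> Domain G \<and> c \<in> range (\<lambda>a. sm a x)}"
  obtain y where "y \<in> Eg s" "\<forall>a. sm a x \<in> Domain G \<longrightarrow> rel_apply G (sm a x) = se a y"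
    using ex_baer_element[OF inj dom hom x(1)] by blast
  then obtain h' where h'_eq: "\<And>t a. t \<in> Domain G \<Longrightarrow> h' (t + sm a x) = rel_apply G t + se a y"
    using ex_extension_by_cyclic[OF E dom hom] by blast
  then have h': "hom_on ?T' sm Mg se Eg h'" "\<forall>t\<in>Domain G. h' t = rel_apply G t"
    using hom_on_sum_cyclic[OF E dom hom x(1) \<open>y \<in> Eg s\<close>] h'_eq[of _ 0] gr_module.sm_zero_left[OF E]
    by auto
  have "t = t + sm 0 x" "sm 0 x \<in> range (\<lambda>a. sm a x)" for t
    by (simp, rule rangeI)
  then have sub: "Domain G \<subseteq> ?T'"
    by blast
  have "x = 0 + sm 1 x" "sm 1 x \<in> range (\<lambda>a. sm a x)"
    by (simp, rule rangeI)
  then have "x \<in> ?T'"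
    using gsub_zero[OF dom] by blast
  have "(z, w) \<in> graph_on ?T' h'" if "(z, w) \<in> G" for z w
  proof -
    have "z \<in> Domain G"
      using that by blast
    then have "w = h' z" "z \<in> ?T'"
      using h'(2) rel_apply_eq[OF sv that] sub by auto
    then show ?thesis
      by (simp add: graph_on_def)
  qed
  then have "G \<subseteq> graph_on ?T' h'"
    by auto
  moreover have "h' z = f z" if "z \<in> S" for z
    using that S agree h'(2) by (metis subsetD)
  then have "extension_graph sm Mg se Eg S f (graph_on ?T' h')"
    using S sub by (intro extension_graph_graph_on[OF gsub_plus[OF dom gsub_cyclic[OF x(1)]] _ h'(1)]) auto
  moreover have "x \<in> Domain (graph_on ?T' h')"
    using \<open>x \<in> ?T'\<close> by simp
  ultimately show ?thesis
    by blast
qed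

text \<open>The definition of \<^const>\<open>gr_injective\<close> only tests modules carried by a fixed type.
  Testing the shifted rings \<open>A(-s)\<close>, carried by the ring's own type, already suffices.\<close>

lemma gr_injective_any_type:
  fixes se :: "'a::comm_ring_1 \<Rightarrow> 'e::ab_group_add \<Rightarrow> 'e"
  assumes E: "gr_module Ag se Eg" and inj: "gr_injective TYPE('a) Ag se Eg"
  shows "gr_injective TYPE('u::ab_group_add) Ag se Eg"
  unfolding gr_injective_def
proof (intro allI impI, elim conjE)
  fix sn :: "'a \<Rightarrow> 'u \<Rightarrow> 'u" and Ng S f
  assume N: "graded_module Ag sn Ng" and S: "graded_submodule sn Ng S" and f: "hom_on S sn Ng se Eg f"
  interpret N: gr_module Ag sn Ng
    by (rule gr_module.intro[OF gr_module.ring[OF E] N])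
  let ?ext = "extension_graph sn Ng se Eg S f"
  have "\<exists>G\<in>Collect ?ext. \<forall>H\<in>Collect ?ext. G \<subseteq> H \<longrightarrow> H = G"
  proof (rule subset_Zorn_nonempty)
    have "?ext (graph_on S f)"
      by (rule N.extension_graph_graph_on[OF S order_refl f]) simp
    then show "Collect ?ext \<noteq> {}"
      by blast
  next
    fix C assume C: "C \<noteq> {}" "subset.chain (Collect ?ext) C"
    then have "\<And>G. G \<in> C \<Longrightarrow> ?ext G" "\<And>G H. G \<in> C \<Longrightarrow> H \<in> C \<Longrightarrow> G \<subseteq> H \<or> H \<subseteq> G"
      unfolding subset_chain_def by blast+
    then show "\<Union>C \<in> Collect ?ext"
      by (intro CollectI N.extension_graph_Union_chain[OF C(1)])
  qed
  then obtain G where G: "?ext G" and max: "\<And>H. ?ext H \<Longrightarrow> G \<subseteq> H \<Longrightarrow> H = G"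
    by blast
  have "Domain G = UNIV"
  proof (rule ccontr)
    assume "Domain G \<noteq> UNIV"
    moreover have "graded_submodule sn Ng (Domain G)"
      using G by (simp add: extension_graph_def)
    ultimately obtain x s where x: "x \<in> Ng s" "x \<notin> Domain G"
      using N.ex_homogeneous_notin by blast
    then obtain H where "?ext H" "G \<subseteq> H" "x \<in> Domain H"
      using N.extension_graph_extend[OF E inj G x] by blast
    then show False
      using max x(2) by blast
  qed
  then show "\<exists>g. gr_hom sn Ng se Eg 0 g \<and> (\<forall>x\<in>S. g x = f x)"
    using G by (auto simp: extension_graph_def hom_on_UNIV)
qed

section \<open>Indecomposable injective modules are uniform\<close>

locale gr_injective_module = gr_module Ag se Eg
  for Ag :: "nat \<Rightarrow> 'a::comm_ring_1 set" and se :: "'a \<Rightarrow> 'e::ab_group_add \<Rightarrow> 'e" and Eg +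
  assumes injective: "gr_injective TYPE('a) Ag se Eg"
begin

lemma extend_hom_on:
  fixes sn :: "'a \<Rightarrow> 'u::ab_group_add \<Rightarrow> 'u"
  assumes "gr_module Ag sn Ng" "graded_submodule sn Ng S" "hom_on S sn Ng se Eg f"
  shows "\<exists>g. gr_hom sn Ng se Eg 0 g \<and> (\<forall>x\<in>S. g x = f x)"
  using gr_injective_any_type[OF gr_module_axioms injective, where 'u='u, unfolded gr_injective_def,
      rule_format, OF conjI[OF gr_module.module[OF assms(1)] conjI[OF assms(2,3)]]] .

end

definition essential_ext :: "('a \<Rightarrow> 'e::ab_group_add \<Rightarrow> 'e) \<Rightarrow> (int \<Rightarrow> 'e set) \<Rightarrow> 'e set \<Rightarrow> 'e set \<Rightarrow> bool" where
  "essential_ext se Eg K N \<longleftrightarrow>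
     (\<forall>v\<in>N. homogeneous Eg v \<and> v \<noteq> 0 \<longrightarrow> (\<exists>a. se a v \<in> K \<and> se a v \<noteq> 0))"

context gr_module
begin

lemma direct_sum_unique:
  assumes M: "graded_submodule sm Mg M" and C: "graded_submodule sm Mg C" and MC: "M \<inter> C = {0}"
    and "m \<in> M" "m' \<in> M" "c \<in> C" "c' \<in> C" "m + c = m' + c'"
  shows "m = m'"
proof -
  have "m - m' = c' - c"
    using assms(8) by (simp add: algebra_simps)
  moreover have "m - m' \<in> M" "c' - c \<in> C"
    using gsub_diff[OF M assms(4,5)] gsub_diff[OF C assms(7,6)] .
  ultimately have "m - m' \<in> M \<inter> C"
    by simp
  then show ?thesis
    using MC by simp
qed

lemma maximal_complement_meets:
  assumes M: "graded_submodule sm Mg M" and C: "graded_submodule sm Mg C"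
    and C_max: "\<And>N. graded_submodule sm Mg N \<Longrightarrow> N \<inter> M = {0} \<Longrightarrow> C \<subseteq> N \<Longrightarrow> N = C"
    and e: "e \<in> Mg k" "e \<notin> C"
  shows "\<exists>c\<in>C. \<exists>a. c + sm a e \<in> M \<and> c + sm a e \<noteq> 0"
proof -
  let ?C' = "{c + w | c w. c \<in> C \<and> w \<in> range (\<lambda>a. sm a e)}"
  have C': "graded_submodule sm Mg ?C'"
    by (rule gsub_plus[OF C gsub_cyclic[OF e(1)]])
  have "e = 0 + sm 1 e" "sm 1 e \<in> range (\<lambda>a. sm a e)"
    by (simp, rule rangeI)
  then have "e \<in> ?C'"
    using gsub_zero[OF C] by blast
  have "c = c + sm 0 e" "sm 0 e \<in> range (\<lambda>a. sm a e)" for c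
    by (simp, rule rangeI)
  then have "C \<subseteq> ?C'"
    by blast
  then have "?C' \<inter> M \<noteq> {0}"
    using C_max[OF C'] \<open>e \<in> ?C'\<close> e(2) by blast
  moreover have "0 \<in> ?C' \<inter> M"
    using gsub_zero[OF C'] gsub_zero[OF M] by blast
  ultimately show ?thesis
    by blast
qed

lemma essential_ext_multiple:
  assumes M: "graded_submodule sm Mg M" and ess: "essential_ext sm Mg K M"
    and v: "v \<in> Mg k" and av: "sm a v \<in> M" "sm a v \<noteq> 0"
  shows "\<exists>b. sm b v \<in> K \<and> sm b v \<noteq> 0"
proof -
  obtain t where t: "component Mg (sm a v) t \<noteq> 0"
    using ex_component_nonzero[OF av(2)] by blast
  have "component Mg (sm a v) t \<in> M"
    using gsub_component[OF M av(1)] .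
  then obtain b where "sm b (component Mg (sm a v) t) \<in> K" "sm b (component Mg (sm a v) t) \<noteq> 0"
    using ess t component_in unfolding essential_ext_def homogeneous_def by blast
  moreover have "sm b (component Mg (sm a v) t) = sm (b * component (Agz Ag) a (t - k)) v"
    by (simp add: component_sm[OF v] sm_mult)
  ultimately show ?thesis
    by metis
qed

lemma hom_on_projection:
  assumes M: "graded_submodule sm Mg M" and C: "graded_submodule sm Mg C" and MC: "M \<inter> C = {0}"
  shows "\<exists>\<pi>. hom_on {m + c | m c. m \<in> M \<and> c \<in> C} sm Mg sm Mg \<pi> \<and>
    (\<forall>m\<in>M. \<forall>c\<in>C. \<pi> (m + c) = m)"
proof -
  let ?D = "{m + c | m c. m \<in> M \<and> c \<in> C}"
  define \<pi> where "\<pi> z = (SOME m. m \<in> M \<and> (\<exists>c\<in>C. z = m + c))" for z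
  have \<pi>_eq: "\<pi> (m + c) = m" if "m \<in> M" "c \<in> C" for m c
  proof -
    have "\<pi> (m + c) \<in> M \<and> (\<exists>c'\<in>C. m + c = \<pi> (m + c) + c')"
      unfolding \<pi>_def by (rule someI[of _ m]) (use that in blast)
    then show ?thesis
      using direct_sum_unique[OF M C MC] that by metis
  qed
  have "hom_on ?D sm Mg sm Mg \<pi>"
    unfolding hom_on_def
  proof (intro conjI ballI allI subsetI)
    fix x y assume "x \<in> ?D" "y \<in> ?D"
    then obtain m c m' c' where mc: "m \<in> M" "c \<in> C" "m' \<in> M" "c' \<in> C" "x = m + c" "y = m' + c'"
      by blast
    then have "\<pi> (x + y) = \<pi> ((m + m') + (c + c'))"
      by (simp add: algebra_simps)
    also have "\<dots> = \<pi> x + \<pi> y"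
      using mc \<pi>_eq gsub_add[OF M mc(1,3)] gsub_add[OF C mc(2,4)] by simp
    finally show "\<pi> (x + y) = \<pi> x + \<pi> y" .
  next
    fix a x assume "x \<in> ?D"
    then obtain m c where "m \<in> M" "c \<in> C" "x = m + c"
      by blast
    then show "\<pi> (sm a x) = sm a (\<pi> x)"
      using \<pi>_eq gsub_sm[OF M] gsub_sm[OF C] by (simp add: sm_add_right)
  next
    fix n w assume "w \<in> \<pi> ` (?D \<inter> Mg n)"
    then obtain m c where mc: "m \<in> M" "c \<in> C" "m + c \<in> Mg n" and w: "w = \<pi> (m + c)"
      by blast
    have "m + c = component Mg m n + component Mg c n"
      using component_homogeneous[OF mc(3), of n] by (simp add: component_add)
    then have "w = component Mg m n"
      using w \<pi>_eq gsub_component[OF M mc(1)] gsub_component[OF C mc(2)] by simp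
    then show "w \<in> Mg n"
      by simp
  qed
  then show ?thesis
    using \<pi>_eq by blast
qed

lemma ex_maximal_complement:
  assumes M: "graded_submodule sm Mg M"
  shows "\<exists>C. graded_submodule sm Mg C \<and> C \<inter> M = {0} \<and>
    (\<forall>N. graded_submodule sm Mg N \<and> N \<inter> M = {0} \<and> C \<subseteq> N \<longrightarrow> N = C)"
proof (rule ex_maximal_gsub[OF gsub_singleton_zero])
  show "{0} \<inter> M = {0}"
    using gsub_zero[OF M] by blast
next
  fix \<C> assume "\<C> \<noteq> {}" "\<And>S. S \<in> \<C> \<Longrightarrow> graded_submodule sm Mg S \<and> S \<inter> M = {0}"
  then show "\<Union>\<C> \<inter> M = {0}"
    using gsub_zero by blast
qed

lemma ex_maximal_essential_ext:
  assumes K: "graded_submodule sm Mg K"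
  obtains M where "graded_submodule sm Mg M" "K \<subseteq> M" "essential_ext sm Mg K M"
    "\<And>N. graded_submodule sm Mg N \<Longrightarrow> M \<subseteq> N \<Longrightarrow> essential_ext sm Mg K N \<Longrightarrow> N = M"
proof -
  let ?P = "\<lambda>N. K \<subseteq> N \<and> essential_ext sm Mg K N"
  have "\<exists>M. graded_submodule sm Mg M \<and> ?P M \<and> (\<forall>N. graded_submodule sm Mg N \<and> ?P N \<and> M \<subseteq> N \<longrightarrow> N = M)"
  proof (rule ex_maximal_gsub[OF K])
    show "?P K"
      unfolding essential_ext_def
    proof (intro conjI order_refl ballI impI)
      fix v assume "v \<in> K" "homogeneous Mg v \<and> v \<noteq> 0"
      then show "\<exists>a. sm a v \<in> K \<and> sm a v \<noteq> 0"
        by (intro exI[of _ 1]) simp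
    qed
  next
    fix \<C> assume \<C>: "\<C> \<noteq> {}" "\<And>S. S \<in> \<C> \<Longrightarrow> graded_submodule sm Mg S \<and> ?P S"
    then have "K \<subseteq> \<Union>\<C>"
      by blast
    moreover have "essential_ext sm Mg K (\<Union>\<C>)"
      unfolding essential_ext_def
    proof (intro ballI impI)
      fix v assume "v \<in> \<Union>\<C>" "homogeneous Mg v \<and> v \<noteq> 0"
      then obtain S where "S \<in> \<C>" "v \<in> S"
        by blast
      then show "\<exists>a. sm a v \<in> K \<and> sm a v \<noteq> 0"
        using \<C>(2) \<open>homogeneous Mg v \<and> v \<noteq> 0\<close> unfolding essential_ext_def by blast
    qed
    ultimately show "?P (\<Union>\<C>)"
      by blast
  qed
  then obtain M where M: "graded_submodule sm Mg M" "K \<subseteq> M" "essential_ext sm Mg K M"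
    and M_max: "\<forall>N. graded_submodule sm Mg N \<and> ?P N \<and> M \<subseteq> N \<longrightarrow> N = M"
    by (elim exE conjE) (rule that, assumption+)
  moreover have "N = M" if "graded_submodule sm Mg N" "M \<subseteq> N" "essential_ext sm Mg K N" for N
    using M_max M(2) that by blast
  ultimately show ?thesis
    using that by blast
qed

end

context gr_injective_module
begin

lemma essential_ext_range_retraction:
  assumes M: "graded_submodule se Eg M" and ess: "essential_ext se Eg K M"
    and C: "graded_submodule se Eg C"
    and C_max: "\<And>N. graded_submodule se Eg N \<Longrightarrow> N \<inter> M = {0} \<Longrightarrow> C \<subseteq> N \<Longrightarrow> N = C"
    and \<psi>: "gr_hom se Eg se Eg 0 \<psi>" "\<forall>m\<in>M. \<psi> m = m" "\<forall>c\<in>C. \<psi> c = 0"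
  shows "essential_ext se Eg K (range \<psi>)"
  unfolding essential_ext_def
proof (intro ballI impI, elim conjE)
  fix v assume "v \<in> range \<psi>" "homogeneous Eg v" "v \<noteq> 0"
  then obtain e k where v: "v = \<psi> e" "v \<in> Eg k"
    unfolding homogeneous_def by blast
  define e' where "e' = component Eg e k"
  have "\<psi> e' = v"
    using gr_hom_component[OF \<psi>(1) graded_decomp_axioms graded_decomp_axioms, of e k] v
    by (simp add: e'_def component_homogeneous)
  have e': "e' \<in> Eg k"
    by (simp add: e'_def)
  have "e' \<notin> C"
    using \<open>\<psi> e' = v\<close> \<psi>(3) \<open>v \<noteq> 0\<close> by blast
  then obtain c a where ca: "c \<in> C" "c + se a e' \<in> M" "c + se a e' \<noteq> 0"
    using maximal_complement_meets[OF M C C_max e'] by blast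
  have "\<psi> (c + se a e') = se a v"
    using gr_hom_add[OF \<psi>(1)] gr_hom_sm[OF \<psi>(1)] \<psi>(3) ca(1) \<open>\<psi> e' = v\<close> by simp
  then have "se a v \<in> M" "se a v \<noteq> 0"
    using \<psi>(2) ca(2,3) by auto
  then show "\<exists>a. se a v \<in> K \<and> se a v \<noteq> 0"
    by (rule essential_ext_multiple[OF M ess v(2)])
qed

lemma ex_retraction:
  assumes M: "graded_submodule se Eg M" and C: "graded_submodule se Eg C" and MC: "M \<inter> C = {0}"
  shows "\<exists>\<psi>. gr_hom se Eg se Eg 0 \<psi> \<and> (\<forall>m\<in>M. \<psi> m = m) \<and> (\<forall>c\<in>C. \<psi> c = 0)"
proof -
  obtain \<pi> where \<pi>: "hom_on {m + c | m c. m \<in> M \<and> c \<in> C} se Eg se Eg \<pi>"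
    and \<pi>_eq: "\<And>m c. m \<in> M \<Longrightarrow> c \<in> C \<Longrightarrow> \<pi> (m + c) = m"
    using hom_on_projection[OF M C MC] by blast
  obtain \<psi> where \<psi>: "gr_hom se Eg se Eg 0 \<psi>" and \<psi>_\<pi>: "\<forall>x\<in>{m + c | m c. m \<in> M \<and> c \<in> C}. \<psi> x = \<pi> x"
    using extend_hom_on[OF gr_module_axioms gsub_plus[OF M C] \<pi>] by blast
  have "\<psi> (m + c) = \<pi> (m + c)" if "m \<in> M" "c \<in> C" for m c
    using \<psi>_\<pi> that by blast
  then have "\<psi> m = m" "\<psi> c = 0" if "m \<in> M" "c \<in> C" for m c
    using \<pi>_eq gsub_zero[OF M] gsub_zero[OF C] that by (metis add.right_neutral, metis add.left_neutral)
  then show ?thesis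
    using \<psi> gsub_zero[OF M] gsub_zero[OF C] by blast
qed

lemma maximal_essential_ext_complemented:
  assumes M: "graded_submodule se Eg M" and ess: "essential_ext se Eg K M"
    and M_max: "\<And>N. graded_submodule se Eg N \<Longrightarrow> M \<subseteq> N \<Longrightarrow> essential_ext se Eg K N \<Longrightarrow> N = M"
  shows "\<exists>C. graded_submodule se Eg C \<and> M \<inter> C = {0} \<and> (\<forall>x. \<exists>m\<in>M. \<exists>c\<in>C. x = m + c)"
proof -
  obtain C where C: "graded_submodule se Eg C" "C \<inter> M = {0}"
    and C_max: "\<And>N. graded_submodule se Eg N \<Longrightarrow> N \<inter> M = {0} \<Longrightarrow> C \<subseteq> N \<Longrightarrow> N = C"
    using ex_maximal_complement[OF M] by blast
  have MC: "M \<inter> C = {0}"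
    using C(2) by blast
  obtain \<psi> where \<psi>: "gr_hom se Eg se Eg 0 \<psi>" and \<psi>_M: "\<forall>m\<in>M. \<psi> m = m" and \<psi>_C: "\<forall>c\<in>C. \<psi> c = 0"
    using ex_retraction[OF M C(1) MC] by blast
  have "range \<psi> = M"
  proof (rule M_max)
    show "graded_submodule se Eg (range \<psi>)"
      by (rule gsub_range[OF \<psi> graded_decomp_axioms])
    show "M \<subseteq> range \<psi>"
      using \<psi>_M by (metis rangeI subsetI)
    show "essential_ext se Eg K (range \<psi>)"
      by (rule essential_ext_range_retraction[OF M ess C(1) C_max \<psi> \<psi>_M \<psi>_C])
  qed
  have "{x. \<psi> x = 0} = C"
  proof (rule C_max)
    show "graded_submodule se Eg {x. \<psi> x = 0}"
      by (rule gsub_kernel[OF \<psi> gr_module_axioms])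
    show "{x. \<psi> x = 0} \<inter> M = {0}"
      using \<psi>_M gr_hom_zero[OF \<psi>] gsub_zero[OF M] by auto
    show "C \<subseteq> {x. \<psi> x = 0}"
      using \<psi>_C by blast
  qed
  have "\<exists>m\<in>M. \<exists>c\<in>C. x = m + c" for x
  proof (intro bexI)
    show "\<psi> x \<in> M"
      using \<open>range \<psi> = M\<close> by blast
    then have "\<psi> (x - \<psi> x) = 0"
      using \<psi>_M gr_hom_diff[OF \<psi>] by simp
    then show "x - \<psi> x \<in> C"
      using \<open>{x. \<psi> x = 0} = C\<close> by blast
  qed simp
  then show ?thesis
    using C(1) MC by blast
qed

end

locale indecomposable_injective = gr_injective_module +
  assumes indecomposable: "indecomposable se Eg"
begin

lemma uniform:
  assumes x: "x \<in> Eg s" "x \<noteq> 0" and u: "homogeneous Eg u" "u \<noteq> 0"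
  shows "\<exists>a b. se a u = se b x \<and> se a u \<noteq> 0"
proof -
  let ?K = "range (\<lambda>a. se a x)"
  obtain M where M: "graded_submodule se Eg M" "?K \<subseteq> M" "essential_ext se Eg ?K M"
    and M_max: "\<And>N. graded_submodule se Eg N \<Longrightarrow> M \<subseteq> N \<Longrightarrow> essential_ext se Eg ?K N \<Longrightarrow> N = M"
    using ex_maximal_essential_ext[OF gsub_cyclic[OF x(1)]] by blast
  then obtain C where C: "graded_submodule se Eg C" "M \<inter> C = {0}" "\<forall>x. \<exists>m\<in>M. \<exists>c\<in>C. x = m + c"
    using maximal_essential_ext_complemented[OF M(1) M(3)] by blast
  have "M = {0} \<or> C = {0}"
    using indecomposable[unfolded indecomposable_def, THEN conjunct2, rule_format,
        OF conjI[OF M(1) conjI[OF C(1) conjI[OF C(2) C(3)]]]] .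
  moreover have "x \<in> M"
    using M(2) rangeI[of "\<lambda>a. se a x" 1] by auto
  ultimately have "C = {0}"
    using x(2) by blast
  then have "u \<in> M"
    using C(3) by fastforce
  then show ?thesis
    using M(3) u unfolding essential_ext_def by blast
qed

end

section \<open>Annihilators and the ideal P(E)\<close>

definition annihilator :: "('a::comm_ring_1 \<Rightarrow> 'm::ab_group_add \<Rightarrow> 'm) \<Rightarrow> 'm \<Rightarrow> 'a set" where
  "annihilator sm x = {a. sm a x = 0}"

lemma (in gr_module) ex_hom_on_cyclic:
  fixes sx :: "'a \<Rightarrow> 'x::ab_group_add \<Rightarrow> 'x"
  assumes X: "gr_module Ag sx Xg" and m: "m \<in> Mg w" and z: "z \<in> Xg w"
    and ann: "annihilator sm m \<subseteq> annihilator sx z"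
  shows "\<exists>f. hom_on (range (\<lambda>a. sm a m)) sm Mg sx Xg f \<and> f m = z"
proof -
  interpret X: gr_module Ag sx Xg by fact
  define f where "f y = sx (SOME a. y = sm a m) z" for y
  have f_eq: "f (sm a m) = sx a z" for a
  proof -
    have "sm a m = sm (SOME a'. sm a m = sm a' m) m"
      by (rule someI[of _ a]) simp
    then have "a - (SOME a'. sm a m = sm a' m) \<in> annihilator sm m"
      by (simp add: annihilator_def sm_diff_left)
    then show ?thesis
      using ann by (auto simp: f_def annihilator_def X.sm_diff_left)
  qed
  have "hom_on (range (\<lambda>a. sm a m)) sm Mg sx Xg f"
    unfolding hom_on_def
  proof (intro conjI ballI allI subsetI)
    fix y1 y2 assume "y1 \<in> range (\<lambda>a. sm a m)" "y2 \<in> range (\<lambda>a. sm a m)"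
    then show "f (y1 + y2) = f y1 + f y2"
      using f_eq by (auto simp flip: sm_add_left simp: X.sm_add_left)
  next
    fix b y assume "y \<in> range (\<lambda>a. sm a m)"
    then show "f (sm b y) = sx b (f y)"
      using f_eq by (auto simp flip: sm_mult simp: X.sm_mult)
  next
    fix k v assume "v \<in> f ` (range (\<lambda>a. sm a m) \<inter> Mg k)"
    then obtain a where a: "sm a m \<in> Mg k" and v: "v = sx a z"
      using f_eq by auto
    have "sm a m = sm (component (Agz Ag) a (k - w)) m"
      using component_homogeneous[OF a, of k] component_sm[OF m] by simp
    then have "v = sx (component (Agz Ag) a (k - w)) z"
      using v f_eq by metis
    then show "v \<in> Xg k"
      using X.sm_in_Mg[OF A.component_in z, of a "k - w"] by simp
  qed
  moreover have "f m = z"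
    using f_eq[of 1] by simp
  ultimately show ?thesis
    by blast
qed

context gr_injective_module
begin

lemma extend_from_cyclic:
  fixes sm :: "'a \<Rightarrow> 'm::ab_group_add \<Rightarrow> 'm"
  assumes M: "gr_module Ag sm Mg" and m: "m \<in> Mg n" and z: "z \<in> Eg w"
    and ann: "annihilator sm m \<subseteq> annihilator se z"
  shows "\<exists>g. gr_hom sm Mg se Eg (w - n) g \<and> g m = z"
proof -
  define Mg' where "Mg' k = Mg (k - (w - n))" for k
  interpret M': gr_module Ag sm Mg'
    unfolding Mg'_def by (rule gr_module.gr_module_shift[OF M])
  have m': "m \<in> Mg' w"
    using m by (simp add: Mg'_def)
  obtain f where f: "hom_on (range (\<lambda>a. sm a m)) sm Mg' se Eg f" "f m = z"
    using M'.ex_hom_on_cyclic[OF gr_module_axioms m' z ann] by blast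
  obtain g where g: "gr_hom sm Mg' se Eg 0 g" "\<forall>y\<in>range (\<lambda>a. sm a m). g y = f y"
    using extend_hom_on[OF M'.gr_module_axioms M'.gsub_cyclic[OF m'] f(1)] by blast
  have "gr_hom sm Mg se Eg (w - n) g"
    using g(1) gr_hom_shift unfolding Mg'_def by metis
  moreover have "g (sm 1 m) = f (sm 1 m)"
    using g(2) by blast
  then have "g m = z"
    using f(2) by simp
  ultimately show ?thesis
    by blast
qed

lemma Hom_nonzero_iff_annihilators:
  fixes sm :: "'a \<Rightarrow> 'm::ab_group_add \<Rightarrow> 'm"
  assumes M: "gr_module Ag sm Mg"
  shows "Hom_nonzero sm Mg se Eg \<longleftrightarrow>
    (\<exists>m z. homogeneous Mg m \<and> homogeneous Eg z \<and> z \<noteq> 0 \<and> annihilator sm m \<subseteq> annihilator se z)"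
proof
  interpret M: gr_module Ag sm Mg by fact
  assume "Hom_nonzero sm Mg se Eg"
  then obtain d f x where f: "gr_hom sm Mg se Eg d f" and "f x \<noteq> 0"
    unfolding Hom_nonzero_def by blast
  then obtain t where t: "component Eg (f x) t \<noteq> 0"
    using ex_component_nonzero by blast
  let ?m = "component Mg x (t - d)"
  have fm: "f ?m = component Eg (f x) t"
    using gr_hom_component[OF f M.graded_decomp_axioms graded_decomp_axioms] by simp
  have "annihilator sm ?m \<subseteq> annihilator se (f ?m)"
    using gr_hom_zero[OF f] by (auto simp: annihilator_def simp flip: gr_hom_sm[OF f])
  moreover have "homogeneous Mg ?m" "homogeneous Eg (f ?m)"
    unfolding homogeneous_def fm using M.component_in component_in by blast+
  ultimately show "\<exists>m z. homogeneous Mg m \<and> homogeneous Eg z \<and> z \<noteq> 0 \<and>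
      annihilator sm m \<subseteq> annihilator se z"
    using t fm by (intro exI[of _ ?m] exI[of _ "f ?m"]) simp
next
  assume "\<exists>m z. homogeneous Mg m \<and> homogeneous Eg z \<and> z \<noteq> 0 \<and> annihilator sm m \<subseteq> annihilator se z"
  then obtain m n z w where "m \<in> Mg n" "z \<in> Eg w" "z \<noteq> 0" "annihilator sm m \<subseteq> annihilator se z"
    unfolding homogeneous_def by blast
  moreover obtain g where "gr_hom sm Mg se Eg (w - n) g" "g m = z"
    using extend_from_cyclic[OF M calculation(1,2,4)] by blast
  ultimately show "Hom_nonzero sm Mg se Eg"
    unfolding Hom_nonzero_def by blast
qed

end

context indecomposable_injective
begin

lemma ex_homogeneous_nonzero: "\<exists>x. homogeneous Eg x \<and> x \<noteq> 0"
proof -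
  have "\<exists>x t. component Eg x t \<noteq> 0"
    using indecomposable[unfolded indecomposable_def, THEN conjunct1] ex_component_nonzero by blast
  then show ?thesis
    unfolding homogeneous_def using component_in by blast
qed

lemma common_nonzero_multiple:
  assumes x: "homogeneous Eg x" "x \<noteq> 0" and y: "homogeneous Eg y" "y \<noteq> 0"
  shows "\<exists>z. homogeneous Eg z \<and> z \<noteq> 0 \<and>
    annihilator se x \<subseteq> annihilator se z \<and> annihilator se y \<subseteq> annihilator se z"
proof -
  obtain s r where s: "x \<in> Eg s" and r: "y \<in> Eg r"
    using x(1) y(1) unfolding homogeneous_def by blast
  obtain a b where ab: "se a y = se b x" "se a y \<noteq> 0"
    using uniform[OF s x(2) y] by blast
  then obtain t where t: "component Eg (se a y) t \<noteq> 0"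
    using ex_component_nonzero by blast
  define a' b' where "a' = component (Agz Ag) a (t - r)" and "b' = component (Agz Ag) b (t - s)"
  let ?z = "component Eg (se a y) t"
  have zy: "?z = se a' y"
    unfolding a'_def by (rule component_sm[OF r])
  have zx: "?z = se b' x"
    unfolding b'_def ab(1) by (rule component_sm[OF s])
  have "se c ?z = 0" if "se c x = 0" for c
    using sm_commute[of c b' x] that by (simp add: zx)
  moreover have "se c ?z = 0" if "se c y = 0" for c
    using sm_commute[of c a' y] that by (simp add: zy)
  moreover have "homogeneous Eg ?z"
    unfolding homogeneous_def using component_in by blast
  ultimately show ?thesis
    using t unfolding annihilator_def by blast
qed

lemma ex_common_annihilated:
  assumes "finite B" "\<forall>b\<in>B. \<exists>x. homogeneous Eg x \<and> x \<noteq> 0 \<and> se b x = 0"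
  shows "\<exists>z. homogeneous Eg z \<and> z \<noteq> 0 \<and> (\<forall>b\<in>B. se b z = 0)"
  using assms
proof (induction B rule: finite_induct)
  case empty
  then show ?case
    using ex_homogeneous_nonzero by simp
next
  case (insert b B)
  then obtain z where z: "homogeneous Eg z" "z \<noteq> 0" "\<forall>b\<in>B. se b z = 0"
    by blast
  obtain x where x: "homogeneous Eg x" "x \<noteq> 0" "se b x = 0"
    using insert.prems by blast
  obtain z' where "homogeneous Eg z'" "z' \<noteq> 0"
    "annihilator se x \<subseteq> annihilator se z'" "annihilator se z \<subseteq> annihilator se z'"
    using common_nonzero_multiple[OF x(1,2) z(1,2)] by blast
  then show ?case
    using x(3) z(3) by (auto simp: annihilator_def)
qed

text \<open>By uniformity the sum of annihilators \<^const>\<open>PE\<close> is a union.\<close>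

lemma PE_iff: "a \<in> PE se Eg \<longleftrightarrow> (\<exists>x. homogeneous Eg x \<and> x \<noteq> 0 \<and> se a x = 0)"
proof
  assume "a \<in> PE se Eg"
  then obtain F c where F: "finite F" "\<forall>x\<in>F. x \<noteq> 0 \<and> homogeneous Eg x \<and> se (c x) x = 0"
    and a: "a = (\<Sum>x\<in>F. c x)"
    unfolding PE_def by blast
  then obtain z where z: "homogeneous Eg z" "z \<noteq> 0" "\<forall>b\<in>c ` F. se b z = 0"
    using ex_common_annihilated[of "c ` F"] by blast
  then have "se a z = 0"
    unfolding a by (simp add: sm_sum_left)
  then show "\<exists>x. homogeneous Eg x \<and> x \<noteq> 0 \<and> se a x = 0"
    using z by blast
next
  assume "\<exists>x. homogeneous Eg x \<and> x \<noteq> 0 \<and> se a x = 0"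
  then obtain x where "homogeneous Eg x" "x \<noteq> 0" "se a x = 0"
    by blast
  then show "a \<in> PE se Eg"
    unfolding PE_def by (intro CollectI exI[of _ "{x}"] exI[of _ "\<lambda>_. a"]) simp
qed

lemma one_notin_PE: "1 \<notin> PE se Eg"
  by (simp add: PE_iff)

lemma ex_common_annihilated_PE:
  "finite B \<Longrightarrow> B \<subseteq> PE se Eg \<Longrightarrow> \<exists>x. homogeneous Eg x \<and> x \<noteq> 0 \<and> (\<forall>b\<in>B. se b x = 0)"
  by (rule ex_common_annihilated) (auto simp: PE_iff)

lemma annihilator_subset_PE: "homogeneous Eg z \<Longrightarrow> z \<noteq> 0 \<Longrightarrow> annihilator se z \<subseteq> PE se Eg"
  by (auto simp: annihilator_def PE_iff)

end

section \<open>Syzygies over a coherent graded ring\<close>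

definition is_syzygy :: "nat \<Rightarrow> nat \<Rightarrow> (nat \<Rightarrow> nat \<Rightarrow> 'a::comm_ring_1) \<Rightarrow> (nat \<Rightarrow> 'a) \<Rightarrow> bool" where
  "is_syzygy q k w t \<longleftrightarrow> (\<forall>i<k. (\<Sum>p<q. t p * w p i) = 0)"

definition generates_syzygies ::
    "nat \<Rightarrow> nat \<Rightarrow> (nat \<Rightarrow> nat \<Rightarrow> 'a::comm_ring_1) \<Rightarrow> nat \<Rightarrow> (nat \<Rightarrow> nat \<Rightarrow> 'a) \<Rightarrow> bool" where
  "generates_syzygies q k w l \<sigma> \<longleftrightarrow> (\<forall>s<l. is_syzygy q k w (\<sigma> s)) \<and>
     (\<forall>t. is_syzygy q k w t \<longrightarrow> (\<exists>\<mu>. \<forall>p<q. t p = (\<Sum>s<l. \<mu> s * \<sigma> s p)))"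

definition append_rows :: "nat \<Rightarrow> (nat \<Rightarrow> 'b) \<Rightarrow> (nat \<Rightarrow> 'b) \<Rightarrow> nat \<Rightarrow> 'b" where
  "append_rows n f g s = (if s < n then f s else g (s - n))"

lemma is_syzygy_column: "is_syzygy q (Suc 0) (\<lambda>p _. v p) t \<longleftrightarrow> (\<Sum>p<q. t p * v p) = 0"
  by (simp add: is_syzygy_def)

lemma sum_append_rows:
  "(\<Sum>s<n + m. append_rows n f g s) = (\<Sum>s<n. f s) + (\<Sum>s<m. g s)"
  by (induction m) (simp_all add: append_rows_def add.assoc)

lemma sum_mult_sum_swap:
  fixes c :: "'s \<Rightarrow> 'a::comm_ring_1"
  shows "(\<Sum>p\<in>P. (\<Sum>s\<in>S. c s * \<sigma> s p) * x p) = (\<Sum>s\<in>S. c s * (\<Sum>p\<in>P. \<sigma> s p * x p))"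
  unfolding sum_distrib_left sum_distrib_right by (subst sum.swap) (simp add: mult.assoc)

lemma sum_delta_left:
  fixes v :: "nat \<Rightarrow> 'a::comm_ring_1"
  shows "p < q \<Longrightarrow> (\<Sum>p'<q. (if p = p' then 1 else 0) * v p') = v p"
  by (simp add: if_distrib[of "\<lambda>c. c * _"] cong: if_cong)

lemma sum_delta_right:
  fixes v :: "nat \<Rightarrow> 'a::comm_ring_1"
  shows "p < q \<Longrightarrow> (\<Sum>p'<q. v p' * (if p' = p then 1 else 0)) = v p"
  by (simp add: if_distrib[of "\<lambda>c. _ * c"] cong: if_cong)

lemma generates_syzygies_no_columns:
  "generates_syzygies q 0 w q (\<lambda>s p. if s = p then 1 else 0)"
  unfolding generates_syzygies_def is_syzygy_def
  by (auto intro!: exI simp: sum_delta_right)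

lemma generates_syzygies_Suc:
  assumes \<sigma>: "generates_syzygies q (Suc 0) (\<lambda>p _. w p k) l1 \<sigma>"
    and \<tau>: "generates_syzygies l1 k (\<lambda>s i. \<Sum>p<q. \<sigma> s p * w p i) l2 \<tau>"
  shows "generates_syzygies q (Suc k) w l2 (\<lambda>u p. \<Sum>s<l1. \<tau> u s * \<sigma> s p)"
proof -
  have \<sigma>_syz: "\<And>s. s < l1 \<Longrightarrow> (\<Sum>p<q. \<sigma> s p * w p k) = 0"
    and \<sigma>_gen: "\<And>t. (\<Sum>p<q. t p * w p k) = 0 \<Longrightarrow> \<exists>\<mu>. \<forall>p<q. t p = (\<Sum>s<l1. \<mu> s * \<sigma> s p)"
    using \<sigma> by (simp_all add: generates_syzygies_def is_syzygy_column)
  have \<tau>_syz: "\<And>u i. u < l2 \<Longrightarrow> i < k \<Longrightarrow> (\<Sum>s<l1. \<tau> u s * (\<Sum>p<q. \<sigma> s p * w p i)) = 0"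
    and \<tau>_gen: "\<And>t. is_syzygy l1 k (\<lambda>s i. \<Sum>p<q. \<sigma> s p * w p i) t \<Longrightarrow>
      \<exists>\<mu>. \<forall>s<l1. t s = (\<Sum>u<l2. \<mu> u * \<tau> u s)"
    using \<tau> by (simp_all add: generates_syzygies_def is_syzygy_def)
  have syz: "is_syzygy q (Suc k) w (\<lambda>p. \<Sum>s<l1. \<tau> u s * \<sigma> s p)" if "u < l2" for u
    unfolding is_syzygy_def
  proof (intro allI impI)
    fix i assume "i < Suc k"
    then show "(\<Sum>p<q. (\<Sum>s<l1. \<tau> u s * \<sigma> s p) * w p i) = 0"
      using \<tau>_syz[OF that] \<sigma>_syz by (cases "i = k") (auto simp: sum_mult_sum_swap)
  qed
  have "\<exists>\<mu>. \<forall>p<q. t p = (\<Sum>u<l2. \<mu> u * (\<Sum>s<l1. \<tau> u s * \<sigma> s p))"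
    if t: "is_syzygy q (Suc k) w t" for t
  proof -
    obtain \<mu>1 where \<mu>1: "\<forall>p<q. t p = (\<Sum>s<l1. \<mu>1 s * \<sigma> s p)"
      using t \<sigma>_gen unfolding is_syzygy_def by blast
    have "is_syzygy l1 k (\<lambda>s i. \<Sum>p<q. \<sigma> s p * w p i) \<mu>1"
      unfolding is_syzygy_def
    proof (intro allI impI)
      fix i assume "i < k"
      have "(\<Sum>s<l1. \<mu>1 s * (\<Sum>p<q. \<sigma> s p * w p i)) = (\<Sum>p<q. t p * w p i)"
        using \<mu>1 by (simp add: sum_mult_sum_swap[symmetric])
      then show "(\<Sum>s<l1. \<mu>1 s * (\<Sum>p<q. \<sigma> s p * w p i)) = 0"
        using t \<open>i < k\<close> unfolding is_syzygy_def by simp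
    qed
    then obtain \<mu>2 where \<mu>2: "\<forall>s<l1. \<mu>1 s = (\<Sum>u<l2. \<mu>2 u * \<tau> u s)"
      using \<tau>_gen by blast
    have "t p = (\<Sum>u<l2. \<mu>2 u * (\<Sum>s<l1. \<tau> u s * \<sigma> s p))" if "p < q" for p
      using \<mu>1 \<mu>2 that by (simp add: sum_mult_sum_swap)
    then show ?thesis
      by blast
  qed
  then show ?thesis
    using syz unfolding generates_syzygies_def by blast
qed

lemma generates_syzygies_change_generators:
  fixes v g :: "nat \<Rightarrow> 'a::comm_ring_1"
  assumes v_g: "\<And>p. p < q \<Longrightarrow> v p = (\<Sum>i<k. \<alpha> p i * g i)"
    and g_v: "\<And>i. i < k \<Longrightarrow> g i = (\<Sum>p<q. \<beta> i p * v p)"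
    and r: "generates_syzygies k (Suc 0) (\<lambda>i _. g i) l r"
  shows "generates_syzygies q (Suc 0) (\<lambda>p _. v p) (q + l)
    (append_rows q (\<lambda>p p'. (if p = p' then 1 else 0) - (\<Sum>i<k. \<alpha> p i * \<beta> i p'))
      (\<lambda>j p'. \<Sum>i<k. r j i * \<beta> i p'))"
    (is "generates_syzygies _ _ _ _ (append_rows q ?\<kappa> ?\<rho>)")
proof -
  have r_syz: "\<And>j. j < l \<Longrightarrow> (\<Sum>i<k. r j i * g i) = 0"
    and r_gen: "\<And>a. (\<Sum>i<k. a i * g i) = 0 \<Longrightarrow> \<exists>b. \<forall>i<k. a i = (\<Sum>j<l. b j * r j i)"
    using r by (simp_all add: generates_syzygies_def is_syzygy_column)
  have via_g: "(\<Sum>p'<q. (\<Sum>i<k. c i * \<beta> i p') * v p') = (\<Sum>i<k. c i * g i)" for c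
    by (simp add: sum_mult_sum_swap g_v)
  have \<kappa>_syz: "(\<Sum>p'<q. ?\<kappa> p p' * v p') = 0" if "p < q" for p
  proof -
    have "(\<Sum>p'<q. ?\<kappa> p p' * v p') = v p - (\<Sum>i<k. \<alpha> p i * g i)"
      using that by (simp add: left_diff_distrib sum_subtractf sum_delta_left via_g)
    then show ?thesis
      using v_g[OF that] by simp
  qed
  have \<rho>_syz: "(\<Sum>p'<q. ?\<rho> j p' * v p') = 0" if "j < l" for j
    using that by (simp add: via_g r_syz)
  have "\<exists>\<mu>. \<forall>p<q. t p = (\<Sum>s<q + l. \<mu> s * append_rows q ?\<kappa> ?\<rho> s p)"
    if t: "(\<Sum>p<q. t p * v p) = 0" for t
  proof -
    define a where "a i = (\<Sum>p<q. t p * \<alpha> p i)" for i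
    have "(\<Sum>i<k. a i * g i) = (\<Sum>p<q. t p * v p)"
      unfolding a_def by (simp add: sum_mult_sum_swap v_g)
    then obtain b where b: "\<forall>i<k. a i = (\<Sum>j<l. b j * r j i)"
      using r_gen t by auto
    have "t p' = (\<Sum>s<q + l. append_rows q t b s * append_rows q ?\<kappa> ?\<rho> s p')" if "p' < q" for p'
    proof -
      have "(\<Sum>s<q + l. append_rows q t b s * append_rows q ?\<kappa> ?\<rho> s p') =
          (\<Sum>s<q + l. append_rows q (\<lambda>s. t s * ?\<kappa> s p') (\<lambda>j. b j * ?\<rho> j p') s)"
        by (rule sum.cong) (simp_all add: append_rows_def)
      also have "\<dots> = (\<Sum>s<q. t s * ?\<kappa> s p') + (\<Sum>j<l. b j * ?\<rho> j p')"
        by (rule sum_append_rows)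
      also have "(\<Sum>s<q. t s * ?\<kappa> s p') = t p' - (\<Sum>i<k. a i * \<beta> i p')"
        using that by (simp add: right_diff_distrib sum_subtractf sum_delta_right a_def
            sum_mult_sum_swap[symmetric] mult.commute)
      also have "(\<Sum>j<l. b j * ?\<rho> j p') = (\<Sum>i<k. a i * \<beta> i p')"
        using b by (simp add: sum_mult_sum_swap[symmetric])
      finally show ?thesis
        by simp
    qed
    then show ?thesis
      by blast
  qed
  moreover have "\<forall>s<q + l. (\<Sum>p<q. append_rows q ?\<kappa> ?\<rho> s p * v p) = 0"
    using \<kappa>_syz \<rho>_syz by (auto simp: append_rows_def)
  ultimately show ?thesis
    by (simp add: generates_syzygies_def is_syzygy_column)
qed

lemma (in gr_module) annihilator_generated_by_syzygies:
  assumes m: "m = (\<Sum>i<k. sm (c i) (g i))"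
    and rel: "\<forall>j<l. (\<Sum>i<k. sm (r j i) (g i)) = 0"
    and rel_gen: "\<forall>a. (\<Sum>i<k. sm (a i) (g i)) = 0 \<longrightarrow> (\<exists>b. \<forall>i<k. a i = (\<Sum>j<l. b j * r j i))"
    and \<sigma>: "generates_syzygies (Suc l) k (append_rows l r (\<lambda>_. c)) L \<sigma>"
  shows "\<forall>s<L. \<sigma> s l \<in> annihilator sm m" and "\<forall>a\<in>annihilator sm m. \<exists>\<mu>. a = (\<Sum>s<L. \<mu> s * \<sigma> s l)"
proof -
  have split: "(\<Sum>p<Suc l. t p * append_rows l r (\<lambda>_. c) p i) = (\<Sum>p<l. t p * r p i) + t l * c i" for t i
    by (simp add: append_rows_def)
  have sm_m: "sm a m = (\<Sum>i<k. sm (a * c i) (g i))" for a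
    unfolding m by (simp add: sm_sum_right sm_mult)
  show "\<forall>s<L. \<sigma> s l \<in> annihilator sm m"
  proof (intro allI impI)
    fix s assume "s < L"
    then have "(\<Sum>p<l. \<sigma> s p * r p i) + \<sigma> s l * c i = 0" if "i < k" for i
      using \<sigma> that split[of "\<sigma> s" i] unfolding generates_syzygies_def is_syzygy_def by simp
    then have "\<sigma> s l * c i = - (\<Sum>p<l. \<sigma> s p * r p i)" if "i < k" for i
      using that by (simp add: eq_neg_iff_add_eq_0 add.commute)
    then have "sm (\<sigma> s l) m = - (\<Sum>i<k. \<Sum>p<l. sm (\<sigma> s p * r p i) (g i))"
      by (simp add: sm_m sm_minus_left sm_sum_left sum_negf)
    also have "\<dots> = - (\<Sum>p<l. sm (\<sigma> s p) (\<Sum>i<k. sm (r p i) (g i)))"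
      by (simp add: sm_sum_right sm_mult sum.swap[of _ "{..<k}"])
    also have "\<dots> = 0"
      using rel by simp
    finally show "\<sigma> s l \<in> annihilator sm m"
      by (simp add: annihilator_def)
  qed
  show "\<forall>a\<in>annihilator sm m. \<exists>\<mu>. a = (\<Sum>s<L. \<mu> s * \<sigma> s l)"
  proof
    fix a assume "a \<in> annihilator sm m"
    then have "(\<Sum>i<k. sm (a * c i) (g i)) = 0"
      by (simp add: annihilator_def sm_m)
    then obtain \<beta> where \<beta>: "\<forall>i<k. a * c i = (\<Sum>j<l. \<beta> j * r j i)"
      using rel_gen[rule_format, of "\<lambda>i. a * c i"] by blast
    have "is_syzygy (Suc l) k (append_rows l r (\<lambda>_. c)) (append_rows l (\<lambda>j. - \<beta> j) (\<lambda>_. a))"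
      unfolding is_syzygy_def split using \<beta> by (simp add: append_rows_def sum_negf)
    then obtain \<mu> where "\<forall>p<Suc l. append_rows l (\<lambda>j. - \<beta> j) (\<lambda>_. a) p = (\<Sum>s<L. \<mu> s * \<sigma> s p)"
      using \<sigma> unfolding generates_syzygies_def by blast
    then have "append_rows l (\<lambda>j. - \<beta> j) (\<lambda>_. a) l = (\<Sum>s<L. \<mu> s * \<sigma> s l)"
      by simp
    then show "\<exists>\<mu>. a = (\<Sum>s<L. \<mu> s * \<sigma> s l)"
      by (auto simp: append_rows_def)
  qed
qed

text \<open>The kernel of the graded map \<open>\<Oplus>\<^sub>p\<^sub><\<^sub>q A(-\<epsilon> p) \<rightarrow> A\<^sup>k\<close> given by the rows of \<open>w\<close>
  is generated by finitely many homogeneous elements.\<close>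

definition fg_syzygies ::
    "(nat \<Rightarrow> 'a::comm_ring_1 set) \<Rightarrow> nat \<Rightarrow> nat \<Rightarrow> (nat \<Rightarrow> nat \<Rightarrow> 'a) \<Rightarrow> (nat \<Rightarrow> int) \<Rightarrow> bool" where
  "fg_syzygies Ag q k w \<epsilon> \<longleftrightarrow>
     (\<exists>l \<sigma> \<eta>. (\<forall>s<l. \<forall>p<q. \<sigma> s p \<in> Agz Ag (\<eta> s - \<epsilon> p)) \<and> generates_syzygies q k w l \<sigma>)"

context
  fixes Ag :: "nat \<Rightarrow> 'a::comm_ring_1 set"
  assumes ring: "graded_ring Ag"
begin

interpretation R: gr_module Ag "(*)" "Agz Ag"
  using gr_module_ring[OF ring, of 0] by simp

lemma Agz_diff: "a \<in> Agz Ag n \<Longrightarrow> b \<in> Agz Ag n \<Longrightarrow> a - b \<in> Agz Ag n"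
  using add_subgroup_diff[OF R.subgroup] .

lemma Agz_sum: "(\<And>i. i \<in> I \<Longrightarrow> f i \<in> Agz Ag n) \<Longrightarrow> sum f I \<in> Agz Ag n"
  using add_subgroup_sum[OF R.subgroup] .

lemma Agz_mult_eq: "a \<in> Agz Ag i \<Longrightarrow> b \<in> Agz Ag j \<Longrightarrow> i + j = n \<Longrightarrow> a * b \<in> Agz Ag n"
  using Agz_mult[OF ring] by blast

lemma Agz_delta: "(if s = p then 1 else 0) \<in> Agz Ag (\<epsilon> s - \<epsilon> p)"
  using one_in_Agz[OF ring] by simp

lemma homogeneous_Agz: "v \<in> Agz Ag e \<Longrightarrow> homogeneous Ag v"
  using R.zero_in[of 0] unfolding homogeneous_def Agz_def by (auto split: if_splits)

lemma homogeneous_coefficients: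
  assumes "x \<in> Agz Ag d" "x = (\<Sum>p<q. c p * v p)" "\<And>p. p < q \<Longrightarrow> v p \<in> Agz Ag (e p)"
  shows "x = (\<Sum>p<q. component (Agz Ag) (c p) (d - e p) * v p)"
proof -
  have "x = component (Agz Ag) x d"
    using assms(1) by (simp add: R.component_homogeneous)
  also have "\<dots> = (\<Sum>p<q. component (Agz Ag) (c p * v p) d)"
    using assms(2) by (simp add: R.component_sum)
  also have "\<dots> = (\<Sum>p<q. component (Agz Ag) (c p) (d - e p) * v p)"
    using assms(3) by (intro sum.cong) (simp_all add: R.component_sm)
  finally show ?thesis .
qed

lemma homogeneous_coefficient_matrix:
  assumes x: "\<forall>i<k. x i \<in> Agz Ag (d i) \<and> (\<exists>c. x i = (\<Sum>p<q. c p * v p))"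
    and v: "\<forall>p<q. v p \<in> Agz Ag (\<epsilon> p)"
  shows "\<exists>\<beta>. (\<forall>i p. \<beta> i p \<in> Agz Ag (d i - \<epsilon> p)) \<and> (\<forall>i<k. x i = (\<Sum>p<q. \<beta> i p * v p))"
proof -
  have ex: "\<forall>i. \<exists>c. i < k \<longrightarrow> x i = (\<Sum>p<q. c p * v p)"
    using x by blast
  obtain \<beta>0 where \<beta>0: "\<And>i. i < k \<Longrightarrow> x i = (\<Sum>p<q. \<beta>0 i p * v p)"
    using choice[OF ex] by blast
  define \<beta> where "\<beta> i p = component (Agz Ag) (\<beta>0 i p) (d i - \<epsilon> p)" for i p
  have "x i = (\<Sum>p<q. \<beta> i p * v p)" if "i < k" for i
    unfolding \<beta>_def using x v that by (intro homogeneous_coefficients[OF _ \<beta>0[OF that]]) auto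
  moreover have "\<beta> i p \<in> Agz Ag (d i - \<epsilon> p)" for i p
    by (simp add: \<beta>_def)
  ultimately show ?thesis
    by blast
qed

lemma fg_syzygies_column:
  assumes coh: "coherent Ag" and v: "\<And>p. p < q \<Longrightarrow> v p \<in> Agz Ag (\<epsilon> p)"
  shows "fg_syzygies Ag q (Suc 0) (\<lambda>p _. v p) \<epsilon>"
proof -
  define J where "J = {\<Sum>p<q. a p * v p | a. True}"
  have "fg_graded_ideal Ag J"
    unfolding fg_graded_ideal_def J_def using v homogeneous_Agz by (intro exI[of _ q] exI[of _ v]) blast
  then have "fin_pres Ag (*) (Agz Ag) J"
    by (rule coh[unfolded coherent_def, rule_format])
  then obtain k :: nat and g :: "nat \<Rightarrow> 'a" and d :: "nat \<Rightarrow> int"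
    and l :: nat and r :: "nat \<Rightarrow> nat \<Rightarrow> 'a" and e :: "nat \<Rightarrow> int"
    where g: "\<forall>i<k. g i \<in> J \<inter> Agz Ag (d i)" and J: "J = {\<Sum>i<k. a i * g i | a. True}"
    and r: "\<forall>j<l. (\<forall>i<k. r j i \<in> Agz Ag (e j - d i)) \<and> (\<Sum>i<k. r j i * g i) = 0"
    and r_gen: "\<forall>a. (\<Sum>i<k. a i * g i) = 0 \<longrightarrow> (\<exists>b. \<forall>i<k. a i = (\<Sum>j<l. b j * r j i))"
    unfolding fin_pres_def by (elim exE conjE) (rule that, assumption+)
  have g_comb: "\<forall>i<k. g i \<in> Agz Ag (d i) \<and> (\<exists>c. g i = (\<Sum>p<q. c p * v p))"
    using g unfolding J_def by blast
  have v_deg: "\<forall>p<q. v p \<in> Agz Ag (\<epsilon> p)"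
    using v by blast
  obtain \<beta> where \<beta>_deg: "\<And>i p. \<beta> i p \<in> Agz Ag (d i - \<epsilon> p)"
    and \<beta>: "\<And>i. i < k \<Longrightarrow> g i = (\<Sum>p<q. \<beta> i p * v p)"
    using homogeneous_coefficient_matrix[OF g_comb v_deg] by blast
  have "v p \<in> J" if "p < q" for p
    unfolding J_def using sum_delta_left[OF that, of v, symmetric] by (intro CollectI exI conjI) simp_all
  then have v_comb: "\<forall>p<q. v p \<in> Agz Ag (\<epsilon> p) \<and> (\<exists>c. v p = (\<Sum>i<k. c i * g i))"
    using v unfolding J by blast
  have g_deg: "\<forall>i<k. g i \<in> Agz Ag (d i)"
    using g by blast
  obtain \<alpha> where \<alpha>_deg: "\<And>p i. \<alpha> p i \<in> Agz Ag (\<epsilon> p - d i)"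
    and \<alpha>: "\<And>p. p < q \<Longrightarrow> v p = (\<Sum>i<k. \<alpha> p i * g i)"
    using homogeneous_coefficient_matrix[OF v_comb g_deg] by blast
  have "generates_syzygies k (Suc 0) (\<lambda>i _. g i) l r"
    using r r_gen by (simp add: generates_syzygies_def is_syzygy_column)
  then have gen: "generates_syzygies q (Suc 0) (\<lambda>p _. v p) (q + l)
    (append_rows q (\<lambda>p p'. (if p = p' then 1 else 0) - (\<Sum>i<k. \<alpha> p i * \<beta> i p'))
      (\<lambda>j p'. \<Sum>i<k. r j i * \<beta> i p'))"
    using generates_syzygies_change_generators[OF \<alpha> \<beta>] by simp
  have "\<alpha> s i * \<beta> i p \<in> Agz Ag (\<epsilon> s - \<epsilon> p)" for s i p
    by (rule Agz_mult_eq[OF \<alpha>_deg \<beta>_deg]) simp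
  then have "(if s = p then 1 else 0) - (\<Sum>i<k. \<alpha> s i * \<beta> i p) \<in> Agz Ag (\<epsilon> s - \<epsilon> p)" for s p
    by (intro Agz_diff Agz_delta Agz_sum)
  moreover have "(\<Sum>i<k. r j i * \<beta> i p) \<in> Agz Ag (e j - \<epsilon> p)" if "j < l" for j p
  proof (rule Agz_sum)
    fix i assume "i \<in> {..<k}"
    then have "r j i \<in> Agz Ag (e j - d i)"
      using r that by simp
    then show "r j i * \<beta> i p \<in> Agz Ag (e j - \<epsilon> p)"
      by (rule Agz_mult_eq[OF _ \<beta>_deg]) simp
  qed
  ultimately have "\<forall>s<q + l. \<forall>p<q. append_rows q (\<lambda>p p'. (if p = p' then 1 else 0) - (\<Sum>i<k. \<alpha> p i * \<beta> i p'))
      (\<lambda>j p'. \<Sum>i<k. r j i * \<beta> i p') s p \<in> Agz Ag (append_rows q \<epsilon> e s - \<epsilon> p)"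
    by (simp add: append_rows_def)
  then show ?thesis
    unfolding fg_syzygies_def using gen by blast
qed

lemma fg_syzygies_matrix:
  assumes coh: "coherent Ag" and w: "\<And>p i. p < q \<Longrightarrow> i < k \<Longrightarrow> w p i \<in> Agz Ag (\<epsilon> p - \<delta> i)"
  shows "fg_syzygies Ag q k w \<epsilon>"
  using w
proof (induction k arbitrary: q w \<epsilon>)
  case 0
  show ?case
    unfolding fg_syzygies_def
    by (intro exI[of _ q] exI[of _ "\<lambda>s p. if s = p then 1 else 0"] exI[of _ \<epsilon>]
        conjI allI impI Agz_delta generates_syzygies_no_columns)
next
  case (Suc k)
  obtain l1 \<sigma> \<eta> where \<sigma>_deg: "\<forall>s<l1. \<forall>p<q. \<sigma> s p \<in> Agz Ag (\<eta> s - (\<epsilon> p - \<delta> k))"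
    and \<sigma>: "generates_syzygies q (Suc 0) (\<lambda>p _. w p k) l1 \<sigma>"
    using fg_syzygies_column[OF coh, of q "\<lambda>p. w p k" "\<lambda>p. \<epsilon> p - \<delta> k"] Suc.prems
    unfolding fg_syzygies_def by blast
  define W where "W s i = (\<Sum>p<q. \<sigma> s p * w p i)" for s i
  have "W s i \<in> Agz Ag ((\<eta> s + \<delta> k) - \<delta> i)" if "s < l1" "i < k" for s i
    unfolding W_def
  proof (rule Agz_sum)
    fix p assume "p \<in> {..<q}"
    then have "\<sigma> s p \<in> Agz Ag (\<eta> s - (\<epsilon> p - \<delta> k))" "w p i \<in> Agz Ag (\<epsilon> p - \<delta> i)"
      using \<sigma>_deg Suc.prems that by simp_all
    then show "\<sigma> s p * w p i \<in> Agz Ag (\<eta> s + \<delta> k - \<delta> i)"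
      by (rule Agz_mult_eq) simp
  qed
  then obtain l2 \<tau> \<theta> where \<tau>_deg: "\<forall>u<l2. \<forall>s<l1. \<tau> u s \<in> Agz Ag (\<theta> u - (\<eta> s + \<delta> k))"
    and \<tau>: "generates_syzygies l1 k W l2 \<tau>"
    using Suc.IH[of l1 W "\<lambda>s. \<eta> s + \<delta> k"] unfolding fg_syzygies_def by blast
  have "(\<Sum>s<l1. \<tau> u s * \<sigma> s p) \<in> Agz Ag (\<theta> u - \<epsilon> p)" if "u < l2" "p < q" for u p
  proof (rule Agz_sum)
    fix s assume "s \<in> {..<l1}"
    then have "\<tau> u s \<in> Agz Ag (\<theta> u - (\<eta> s + \<delta> k))" "\<sigma> s p \<in> Agz Ag (\<eta> s - (\<epsilon> p - \<delta> k))"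
      using \<sigma>_deg \<tau>_deg that by simp_all
    then show "\<tau> u s * \<sigma> s p \<in> Agz Ag (\<theta> u - \<epsilon> p)"
      by (rule Agz_mult_eq) simp
  qed
  moreover have "generates_syzygies q (Suc k) w l2 (\<lambda>u p. \<Sum>s<l1. \<tau> u s * \<sigma> s p)"
    using generates_syzygies_Suc[where w=w and k=k, OF \<sigma> \<tau>[unfolded W_def]] .
  ultimately show ?case
    unfolding fg_syzygies_def by (intro exI[of _ l2] exI[of _ "\<lambda>u p. \<Sum>s<l1. \<tau> u s * \<sigma> s p"] exI[of _ \<theta>]) blast
qed

end

lemma (in gr_module) annihilator_finitely_generated:
  assumes coh: "coherent Ag" and fp: "fin_pres Ag sm Mg UNIV" and m: "m \<in> Mg n"
  shows "\<exists>(L::nat) b. (\<forall>j<L. b j \<in> annihilator sm m) \<and>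
    (\<forall>a\<in>annihilator sm m. \<exists>\<mu>. a = (\<Sum>j<L. \<mu> j * b j))"
proof -
  obtain k :: nat and g :: "nat \<Rightarrow> 'm" and d :: "nat \<Rightarrow> int"
    and l :: nat and r :: "nat \<Rightarrow> nat \<Rightarrow> 'a" and e :: "nat \<Rightarrow> int"
    where g: "\<forall>i<k. g i \<in> UNIV \<inter> Mg (d i)" and gen: "UNIV = {\<Sum>i<k. sm (a i) (g i) | a. True}"
    and r: "\<forall>j<l. (\<forall>i<k. r j i \<in> Agz Ag (e j - d i)) \<and> (\<Sum>i<k. sm (r j i) (g i)) = 0"
    and r_gen: "\<forall>a. (\<Sum>i<k. sm (a i) (g i)) = 0 \<longrightarrow> (\<exists>b. \<forall>i<k. a i = (\<Sum>j<l. b j * r j i))"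
    using fp unfolding fin_pres_def by (elim exE conjE) (rule that, assumption+)
  obtain a0 where "m = (\<Sum>i<k. sm (a0 i) (g i))"
    using gen by blast
  define c where "c i = component (Agz Ag) (a0 i) (n - d i)" for i
  have "m = component Mg m n"
    using m by (simp add: component_homogeneous)
  also have "\<dots> = (\<Sum>i<k. sm (c i) (g i))"
    unfolding \<open>m = (\<Sum>i<k. sm (a0 i) (g i))\<close> component_sum
    using g by (intro sum.cong refl) (simp add: c_def component_sm)
  finally have m_c: "m = (\<Sum>i<k. sm (c i) (g i))" .
  have "fg_syzygies Ag (Suc l) k (append_rows l r (\<lambda>_. c)) (append_rows l e (\<lambda>_. n))"
    using r by (intro fg_syzygies_matrix[OF ring coh]) (auto simp: append_rows_def c_def)
  then obtain L \<sigma> where \<sigma>: "generates_syzygies (Suc l) k (append_rows l r (\<lambda>_. c)) L \<sigma>"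
    unfolding fg_syzygies_def by blast
  have "\<forall>j<l. (\<Sum>i<k. sm (r j i) (g i)) = 0"
    using r by blast
  note ann = annihilator_generated_by_syzygies[OF m_c this r_gen \<sigma>]
  show ?thesis
    by (rule exI[of _ L], rule exI[of _ "\<lambda>s. \<sigma> s l"]) (use ann in simp)
qed

section \<open>Comparison of E with the injective hull of A/P(E)\<close>

lemma (in indecomposable_injective) ex_annihilator_superset:
  fixes sm :: "'a \<Rightarrow> 'm::ab_group_add \<Rightarrow> 'm"
  assumes coh: "coherent Ag" and M: "gr_module Ag sm Mg" and fp: "fin_pres Ag sm Mg UNIV"
    and m: "homogeneous Mg m" and a: "homogeneous (Agz Ag) a" "a \<notin> PE se Eg"
    and ann: "\<forall>d\<in>annihilator sm m. d * a \<in> PE se Eg"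
  shows "\<exists>z. homogeneous Eg z \<and> z \<noteq> 0 \<and> annihilator sm m \<subseteq> annihilator se z"
proof -
  obtain n where "m \<in> Mg n"
    using m unfolding homogeneous_def by blast
  then obtain L :: nat and b where b: "\<forall>j<L. b j \<in> annihilator sm m"
    and b_gen: "\<forall>c\<in>annihilator sm m. \<exists>\<mu>. c = (\<Sum>j<L. \<mu> j * b j)"
    using gr_module.annihilator_finitely_generated[OF M coh fp] by blast
  have "(\<lambda>j. b j * a) ` {..<L} \<subseteq> PE se Eg"
    using ann b by blast
  then obtain x where x: "homogeneous Eg x" "x \<noteq> 0" "\<forall>c\<in>(\<lambda>j. b j * a) ` {..<L}. se c x = 0"
    using ex_common_annihilated_PE[of "(\<lambda>j. b j * a) ` {..<L}"] by blast
  have "se a x \<noteq> 0"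
  proof
    assume "se a x = 0"
    then have "a \<in> PE se Eg"
      using x(1,2) by (auto simp: PE_iff)
    then show False
      using a(2) by contradiction
  qed
  moreover have "homogeneous Eg (se a x)"
  proof -
    obtain i r where "a \<in> Agz Ag i" "x \<in> Eg r"
      using a(1) x(1) unfolding homogeneous_def by blast
    then show ?thesis
      unfolding homogeneous_def by (blast intro: sm_in_Mg)
  qed
  moreover have "se c (se a x) = 0" if c: "c \<in> annihilator sm m" for c
  proof -
    obtain \<mu> where \<mu>: "c = (\<Sum>j<L. \<mu> j * b j)"
      using b_gen c by blast
    have x3: "se (b j * a) x = 0" if "j < L" for j
      using x(3) that by blast
    have "se c (se a x) = se (\<Sum>j<L. \<mu> j * (b j * a)) x"
      unfolding \<mu> by (simp add: sm_mult[symmetric] sum_distrib_right mult.assoc)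
    also have "\<dots> = (\<Sum>j<L. se (\<mu> j) (se (b j * a) x))"
      by (simp only: sm_sum_left sm_mult)
    also have "\<dots> = 0"
      using x3 by simp
    finally show ?thesis .
  qed
  ultimately show ?thesis
    unfolding annihilator_def by blast
qed

text \<open>The module \<open>F\<close> plays the role of \<open>E\<^sub>P\<close>, with \<open>A/P\<close> embedded through \<open>\<phi>\<close>.\<close>

locale quotient_hull = gr_injective_module Ag sf Fg
  for Ag :: "nat \<Rightarrow> 'a::comm_ring_1 set" and sf :: "'a \<Rightarrow> 'f::ab_group_add \<Rightarrow> 'f" and Fg +
  fixes P :: "'a set" and \<phi> :: "'a \<Rightarrow> 'f"
  assumes hom: "gr_hom (*) (Agz Ag) sf Fg 0 \<phi>" and kernel: "{a. \<phi> a = 0} = P"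
    and essential: "\<forall>S. graded_submodule sf Fg S \<and> S \<noteq> {0} \<longrightarrow> (\<exists>y\<in>S. y \<noteq> 0 \<and> y \<in> range \<phi>)"
begin

lemma in_P_iff: "a \<in> P \<longleftrightarrow> \<phi> a = 0"
  using kernel by blast

lemma annihilator_generator: "annihilator sf (\<phi> 1) = P"
proof -
  have "sf a (\<phi> 1) = \<phi> a" for a
    using gr_hom_sm[OF hom, of a 1] by simp
  then show ?thesis
    by (auto simp: annihilator_def in_P_iff)
qed

lemma homogeneous_generator: "homogeneous Fg (\<phi> 1)"
  using gr_hom_in[OF hom one_in_Agz[OF ring]] unfolding homogeneous_def by auto

lemma generator_nonzero: "1 \<notin> P \<Longrightarrow> \<phi> 1 \<noteq> 0"
  by (simp add: in_P_iff)

lemma essential_image_annihilator: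
  fixes sm :: "'a \<Rightarrow> 'm::ab_group_add \<Rightarrow> 'm"
  assumes M: "gr_module Ag sm Mg" and m: "homogeneous Mg m" and z: "homogeneous Fg z" "z \<noteq> 0"
    and ann: "annihilator sm m \<subseteq> annihilator sf z"
  shows "\<exists>m' a'. homogeneous Mg m' \<and> homogeneous (Agz Ag) a' \<and> a' \<notin> P \<and>
    (\<forall>d\<in>annihilator sm m'. d * a' \<in> P)"
proof -
  interpret M: gr_module Ag sm Mg by fact
  obtain n w where n: "m \<in> Mg n" and w: "z \<in> Fg w"
    using m z(1) unfolding homogeneous_def by blast
  have "sf 1 z \<in> range (\<lambda>c. sf c z)"
    by (rule rangeI)
  then have "range (\<lambda>c. sf c z) \<noteq> {0}"
    using z(2) by auto
  then obtain y where "y \<in> range (\<lambda>c. sf c z)" "y \<noteq> 0" "y \<in> range \<phi>"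
    using essential gsub_cyclic[OF w] by blast
  then obtain c a where ca: "sf c z = \<phi> a" "\<phi> a \<noteq> 0"
    by auto
  then obtain t where t: "component Fg (\<phi> a) t \<noteq> 0"
    using ex_component_nonzero by blast
  define c' where "c' = component (Agz Ag) c (t - w)"
  define a' where "a' = component (Agz Ag) a t"
  have "component Fg (\<phi> a) t = \<phi> a'"
    using gr_hom_component[OF hom A.graded_decomp_axioms graded_decomp_axioms] by (simp add: a'_def)
  moreover have "component Fg (\<phi> a) t = sf c' z"
    unfolding c'_def ca(1)[symmetric] by (rule component_sm[OF w])
  ultimately have \<phi>a': "\<phi> a' = sf c' z"
    by simp
  have "d * a' \<in> P" if "d \<in> annihilator sm (sm c' m)" for d
  proof -
    have "d * c' \<in> annihilator sm m"
      using that by (simp add: annihilator_def M.sm_mult)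
    then have "sf (d * c') z = 0"
      using ann by (auto simp: annihilator_def)
    then show ?thesis
      using gr_hom_sm[OF hom, of d a'] \<phi>a' by (simp add: sm_mult in_P_iff)
  qed
  moreover have "homogeneous Mg (sm c' m)"
    using M.sm_in_Mg[OF A.component_in n] unfolding c'_def homogeneous_def by blast
  moreover have "homogeneous (Agz Ag) a'"
    unfolding a'_def homogeneous_def using A.component_in by blast
  moreover have "a' \<notin> P"
    using t \<open>component Fg (\<phi> a) t = \<phi> a'\<close> by (simp add: in_P_iff)
  ultimately show ?thesis
    by blast
qed

end

lemma quotient_hull_of_inj_hull_quot:
  fixes Ag :: "nat \<Rightarrow> 'a::comm_ring_1 set"
  assumes "graded_ring Ag" "inj_hull_quot TYPE('a) Ag P sf Fg"
  obtains \<phi> where "quotient_hull Ag sf Fg P \<phi>"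
proof -
  obtain \<phi> where "graded_module Ag sf Fg" "gr_injective TYPE('a) Ag sf Fg"
    and "gr_hom (*) (Agz Ag) sf Fg 0 \<phi>" "{a. \<phi> a = 0} = P"
    and "\<forall>S. graded_submodule sf Fg S \<and> S \<noteq> {0} \<longrightarrow> (\<exists>y\<in>S. y \<noteq> 0 \<and> y \<in> range \<phi>)"
    using assms(2) unfolding inj_hull_quot_def by (elim exE conjE) (rule that, assumption+)
  then have "quotient_hull Ag sf Fg P \<phi>"
    by (intro quotient_hull.intro quotient_hull_axioms.intro gr_injective_module.intro
        gr_module.intro gr_injective_module_axioms.intro assms(1))
  then show ?thesis
    by (rule that)
qed

theorem theorem3p9:
  fixes Ag :: "nat \<Rightarrow> 'a::comm_ring_1 set"
    and se :: "'a \<Rightarrow> 'e::ab_group_add \<Rightarrow> 'e" and Eg :: "int \<Rightarrow> 'e set"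
    and sf :: "'a \<Rightarrow> 'f::ab_group_add \<Rightarrow> 'f" and Fg :: "int \<Rightarrow> 'f set"
    and sm :: "'a \<Rightarrow> 'm::ab_group_add \<Rightarrow> 'm" and Mg :: "int \<Rightarrow> 'm set"
  assumes "graded_ring Ag" and "coherent Ag"
    and "graded_module Ag se Eg" and "gr_injective TYPE('a) Ag se Eg" and "indecomposable se Eg"
    and "inj_hull_quot TYPE('a) Ag (PE se Eg) sf Fg"
    and "in_grA Ag sm Mg"
  shows "Hom_nonzero sm Mg se Eg \<longleftrightarrow> Hom_nonzero sm Mg sf Fg"
proof -
  interpret E: indecomposable_injective Ag se Eg
    by (intro indecomposable_injective.intro gr_injective_module.intro gr_module.intro
        gr_injective_module_axioms.intro indecomposable_injective_axioms.intro assms(1,3,4,5))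
  obtain \<phi> where "quotient_hull Ag sf Fg (PE se Eg) \<phi>"
    using quotient_hull_of_inj_hull_quot[OF assms(1,6)] .
  then interpret F: quotient_hull Ag sf Fg "PE se Eg" \<phi> .
  have M: "gr_module Ag sm Mg" and fp: "fin_pres Ag sm Mg UNIV"
    using assms(1,7) by (simp_all add: in_grA_def gr_module_def)
  show ?thesis
    unfolding E.Hom_nonzero_iff_annihilators[OF M] F.Hom_nonzero_iff_annihilators[OF M]
  proof
    assume "\<exists>m z. homogeneous Mg m \<and> homogeneous Eg z \<and> z \<noteq> 0 \<and> annihilator sm m \<subseteq> annihilator se z"
    then obtain m where "homogeneous Mg m" "annihilator sm m \<subseteq> annihilator sf (\<phi> 1)"
      using E.annihilator_subset_PE F.annihilator_generator by blast
    then show "\<exists>m z. homogeneous Mg m \<and> homogeneous Fg z \<and> z \<noteq> 0 \<and> annihilator sm m \<subseteq> annihilator sf z"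
      using F.homogeneous_generator F.generator_nonzero[OF E.one_notin_PE] by blast
  next
    assume "\<exists>m z. homogeneous Mg m \<and> homogeneous Fg z \<and> z \<noteq> 0 \<and> annihilator sm m \<subseteq> annihilator sf z"
    then obtain m a where "homogeneous Mg m" "homogeneous (Agz Ag) a" "a \<notin> PE se Eg"
      "\<forall>d\<in>annihilator sm m. d * a \<in> PE se Eg"
      using F.essential_image_annihilator[OF M] by blast
    then show "\<exists>m z. homogeneous Mg m \<and> homogeneous Eg z \<and> z \<noteq> 0 \<and> annihilator sm m \<subseteq> annihilator se z"
      using E.ex_annihilator_superset[OF assms(2) M fp] by blast
  qed
qed

end
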